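(* In the triangular-array setting (for each $n$, an independent trajectory $H^n_{m_n}$ of length $m_n$ generated by the adaptive linear Gaussian sampling procedure with sampling rule $\Lambda^n$, with the same true $\beta_0\in\mathbb{R}^p$, variance $\sigma^2>0$ and prior $\pi$ for all $n$), let $\mathbf{X}_n$ be the $m_n\times p$ matrix with rows $(x^n_j)^\top$, $\mathbf{y}_n=(y^n_1,\dots,y^n_{m_n})^\top$, and $\hat\beta_n=(\mathbf{X}_n^\top\mathbf{X}_n)^{-1}\mathbf{X}_n^\top\mathbf{y}_n$. Assume: (i) each $x^n_j\in\{e_1,\dots,e_p\}$; (ii) $\lambda_{\min}(\mathbf{X}_n^\top\mathbf{X}_n)\xrightarrow{p}\infty$; (iii) $\pi$ is a continuous and bounded density on $\mathbb{R}^p$ with $\pi(\beta_0)>0$. Then $$\big\|\pi(\cdot\mid H^n_{m_n})-\mathcal{N}\big(\hat\beta_n,\sigma^2(\mathbf{X}_n^\top\mathbf{X}_n)^{-1}\big)\big\|_{\mathrm{TV}}\xrightarrow{p}0.$$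
   Context: Adaptive linear Gaussian sampling procedure: given a covariate sampling rule $\Lambda$ that maps any finite history $H_{j-1}=((x_1,y_1),\dots,(x_{j-1},y_{j-1}))$ to a probability distribution $\Lambda(\cdot\mid H_{j-1})$ on $\mathbb{R}^p$, a coefficient vector $\beta$ and known variance $\sigma^2>0$, set $H_0=\emptyset$ and for $j=1,2,\dots$: draw $x_j\sim\Lambda(\cdot\mid H_{j-1})$, then $y_j\sim\mathcal{N}(x_j^\top\beta,\sigma^2)$ conditionally on the past and $x_j$, and set $H_j=((x_1,y_1),\dots,(x_j,y_j))$. The posterior is $\pi(\beta\mid H^n_{m_n})\propto\pi(\beta)\prod_{j=1}^{m_n}\exp\!\big(-(y^n_j-(x^n_j)^\top\beta)^2/(2\sigma^2)\big)$. $\|\cdot\|_{\mathrm{TV}}$ is total variation distance; $\lambda_{\min}$ the smallest eigenvalue. *)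

theory Defs
  imports "HOL-Probability.Probability"
begin

text \<open>A history of length j is a function on the indices 0..j-1 (index k stands for the
(k+1)-st pair (x,y)); the measurable space of histories of length j:\<close>

definition hist_space :: "nat \<Rightarrow> (nat \<Rightarrow> (real^'p::finite) \<times> real) measure" where
  "hist_space j = PiM {..<j} (\<lambda>_. borel)"

text \<open>Law of the trajectory H_j produced by the sampling rule Lam (Lam j h is the
distribution of x_{j+1} given the history h of length j), coefficient beta and noise
standard deviation sd (variance sd^2).\<close>

primrec traj :: "(nat \<Rightarrow> (nat \<Rightarrow> (real^'p::finite) \<times> real) \<Rightarrow> (real^'p) measure)
    \<Rightarrow> real^'p \<Rightarrow> real \<Rightarrow> nat \<Rightarrow> (nat \<Rightarrow> (real^'p) \<times> real) measure" where
  "traj Lam beta sd 0 = return (hist_space 0) (\<lambda>_. undefined)"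
| "traj Lam beta sd (Suc j) =
     traj Lam beta sd j \<bind> (\<lambda>h. Lam j h \<bind> (\<lambda>x.
       density lborel (normal_density (x \<bullet> beta) sd) \<bind> (\<lambda>y.
         return (hist_space (Suc j)) (h(j := (x, y))))))"

definition gram :: "(nat \<Rightarrow> (real^'p::finite) \<times> real) \<Rightarrow> nat \<Rightarrow> real^'p^'p" where
  "gram h m = (\<Sum>j<m. (\<chi> a b. fst (h j) $ a * fst (h j) $ b))"

definition xty :: "(nat \<Rightarrow> (real^'p::finite) \<times> real) \<Rightarrow> nat \<Rightarrow> real^'p" where
  "xty h m = (\<Sum>j<m. snd (h j) *\<^sub>R fst (h j))"

definition ols :: "(nat \<Rightarrow> (real^'p::finite) \<times> real) \<Rightarrow> nat \<Rightarrow> real^'p" where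
  "ols h m = matrix_inv (gram h m) *v xty h m"

definition eigenvalues :: "real^'p^'p \<Rightarrow> real set" where
  "eigenvalues A = {c. \<exists>v. v \<noteq> 0 \<and> A *v v = c *\<^sub>R v}"

definition lambda_min :: "real^'p^'p \<Rightarrow> real" where
  "lambda_min A = Min (eigenvalues A)"

definition mvn :: "(real^'p::finite) \<Rightarrow> real^'p^'p \<Rightarrow> (real^'p) measure" where
  "mvn mu Cov = density lborel (\<lambda>b. ennreal
     ((2 * pi) powr (- real CARD('p) / 2) * det Cov powr (- 1 / 2)
       * exp (- (1 / 2) * ((b - mu) \<bullet> (matrix_inv Cov *v (b - mu))))))"

definition lik :: "real \<Rightarrow> (nat \<Rightarrow> (real^'p::finite) \<times> real) \<Rightarrow> nat \<Rightarrow> real^'p \<Rightarrow> real" where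
  "lik sd h m b = (\<Prod>j<m. exp (- (snd (h j) - fst (h j) \<bullet> b)\<^sup>2 / (2 * sd\<^sup>2)))"

definition posterior :: "((real^'p::finite) \<Rightarrow> real) \<Rightarrow> real \<Rightarrow> (nat \<Rightarrow> (real^'p) \<times> real)
    \<Rightarrow> nat \<Rightarrow> (real^'p) measure" where
  "posterior prior sd h m = density lborel (\<lambda>b. ennreal
     (prior b * lik sd h m b / (\<integral>c. prior c * lik sd h m c \<partial>lborel)))"

definition tv_dist :: "'a measure \<Rightarrow> 'a measure \<Rightarrow> real" where
  "tv_dist M N = (SUP A \<in> sets M. \<bar>measure M A - measure N A\<bar>)"

definition outer_prob :: "'a measure \<Rightarrow> 'a set \<Rightarrow> real" where
  "outer_prob M S = Inf {measure M A | A. A \<in> sets M \<and> S \<inter> space M \<subseteq> A}"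

definition tends_to_zero_in_prob :: "(nat \<Rightarrow> 'a measure) \<Rightarrow> (nat \<Rightarrow> 'a \<Rightarrow> real) \<Rightarrow> bool" where
  "tends_to_zero_in_prob P Z \<longleftrightarrow>
     (\<forall>e>0. (\<lambda>n. outer_prob (P n) {h \<in> space (P n). \<bar>Z n h\<bar> > e}) \<longlonglongrightarrow> 0)"

definition tends_to_infinity_in_prob :: "(nat \<Rightarrow> 'a measure) \<Rightarrow> (nat \<Rightarrow> 'a \<Rightarrow> real) \<Rightarrow> bool" where
  "tends_to_infinity_in_prob P Z \<longleftrightarrow>
     (\<forall>K. (\<lambda>n. outer_prob (P n) {h \<in> space (P n). Z n h \<le> K}) \<longlonglongrightarrow> 0)"

end

theory Submission
  imports Defs
begin

text \<open>
In a basis design every covariate is a standard basis vector e_i, so sampling amounts to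
choosing one of p arms. Then X^T X is diagonal with the arm counts N_i on the diagonal, the
least-squares estimate is the vector of arm means, and the likelihood is proportional to the
product of the normal densities with means the arm means and standard deviations sd / sqrt N_i;
that product is exactly N(beta_hat, sd^2 (X^T X)^-1). So the posterior is this Gaussian
reweighted by the prior and renormalised. Once every N_i is large and every arm mean is close to
beta0, the Gaussian concentrates where the continuous prior is almost the constant
prior beta0 > 0, and the L1 distance, hence the TV distance, is small.

The arm means are consistent however adaptively the arms are chosen: for each coordinate and
sign, the exponential of the log-likelihood ratio of a tilted model is a nonnegative
supermartingale with mean at most 1, so by Markov's inequality an arm drawn at least K times has
mean off by more than epsilon with probability at most 2 exp (- epsilon^2 K / (2 sd^2)). As
lambda_min (X^T X) = min_i N_i tends to infinity in probability, both exceptional events become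
negligible.
\<close>

section \<open>Trajectories of the adaptive design\<close>

definition obs_law :: "real^'p::finite \<Rightarrow> real \<Rightarrow> real^'p \<Rightarrow> real measure" where
  "obs_law beta sd x = density lborel (\<lambda>y. ennreal (normal_density (x \<bullet> beta) sd y))"

definition traj_step :: "(nat \<Rightarrow> (nat \<Rightarrow> (real^'p::finite) \<times> real) \<Rightarrow> (real^'p) measure)
    \<Rightarrow> real^'p \<Rightarrow> real \<Rightarrow> nat \<Rightarrow> (nat \<Rightarrow> (real^'p) \<times> real) \<Rightarrow> (nat \<Rightarrow> (real^'p) \<times> real) measure" where
  "traj_step Lam beta sd j h =
     Lam j h \<bind> (\<lambda>x. obs_law beta sd x \<bind> (\<lambda>y. return (hist_space (Suc j)) (h(j := (x, y)))))"

lemma traj_Suc: "traj Lam beta sd (Suc j) = traj Lam beta sd j \<bind> traj_step Lam beta sd j"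
  by (simp add: traj_step_def[abs_def] obs_law_def)

lemma obs_law_measurable:
  assumes "sd > 0"
  shows "obs_law beta sd \<in> borel \<rightarrow>\<^sub>M prob_algebra borel"
proof (rule measurable_prob_algebra_generated[where \<Omega>=UNIV and G="sets borel"])
  show "sets borel = sigma_sets UNIV (sets (borel::real measure))"
    by (simp add: sets.sigma_sets_eq[of borel, simplified])
  show "prob_space (obs_law beta sd x)" for x
    using prob_space_normal_density assms by (simp add: obs_law_def)
  fix A :: "real set" assume A: "A \<in> sets borel"
  have "(\<lambda>x. \<integral>\<^sup>+ y. ennreal (normal_density (x \<bullet> beta) sd y) * indicator A y \<partial>lborel)
          \<in> borel_measurable borel"
    using A by (intro lborel.borel_measurable_nn_integral) (auto simp: normal_density_def)
  then show "(\<lambda>x. emeasure (obs_law beta sd x) A) \<in> borel_measurable borel"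
    using A by (simp add: obs_law_def emeasure_density)
qed (auto simp: Int_stable_def obs_law_def)

lemma hist_upd_measurable:
  "(\<lambda>((h, x), y). h(j := (x, y))) \<in> (hist_space j \<Otimes>\<^sub>M borel) \<Otimes>\<^sub>M borel \<rightarrow>\<^sub>M hist_space (Suc j)"
  unfolding hist_space_def split_beta'
  by (rule measurable_fun_upd[where J="{..<j}"]) auto

lemma hist_upd_measurable_fixed:
  assumes "h \<in> space (hist_space j)"
  shows "(\<lambda>(x, y). h(j := (x, y))) \<in> borel \<Otimes>\<^sub>M borel \<rightarrow>\<^sub>M hist_space (Suc j)"
  using assms unfolding hist_space_def split_beta'
  by (intro measurable_fun_upd[where J="{..<j}"]) (auto simp: borel_prod)

lemma hist_upd_in_space:
  "h \<in> space (hist_space j) \<Longrightarrow> h(j := z) \<in> space (hist_space (Suc j))"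
  by (auto simp: hist_space_def space_PiM PiE_def extensional_def)

lemma hist_component_measurable:
  assumes "j < k"
  shows "(\<lambda>h. h j) \<in> hist_space k \<rightarrow>\<^sub>M (borel::(real^'p::finite) measure) \<Otimes>\<^sub>M (borel::real measure)"
  using assms unfolding hist_space_def borel_prod[symmetric]
  by (intro measurable_component_singleton) auto

lemma obs_step_measurable:
  assumes "sd > 0" and "h \<in> space (hist_space j)"
  shows "(\<lambda>x. obs_law beta sd x \<bind> (\<lambda>y. return (hist_space (Suc j)) (h(j := (x, y)))))
           \<in> borel \<rightarrow>\<^sub>M prob_algebra (hist_space (Suc j))"
proof (rule measurable_bind_prob_space2[OF obs_law_measurable[OF assms(1)]])
  show "(\<lambda>(x, y). return (hist_space (Suc j)) (h(j := (x, y))))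
          \<in> borel \<Otimes>\<^sub>M borel \<rightarrow>\<^sub>M prob_algebra (hist_space (Suc j))"
    using measurable_compose[OF hist_upd_measurable_fixed[OF assms(2)] measurable_return_prob_space]
    by (simp add: split_beta')
qed

lemma traj_step_measurable:
  assumes Lam: "Lam j \<in> hist_space j \<rightarrow>\<^sub>M prob_algebra borel" and sd: "sd > 0"
  shows "traj_step Lam beta sd j \<in> hist_space j \<rightarrow>\<^sub>M prob_algebra (hist_space (Suc j))"
  unfolding traj_step_def
proof (rule measurable_bind_prob_space2[OF Lam], simp only: split_beta',
    rule measurable_bind_prob_space2[where N=borel])
  show "(\<lambda>hx. obs_law beta sd (snd hx)) \<in> hist_space j \<Otimes>\<^sub>M borel \<rightarrow>\<^sub>M prob_algebra borel"
    by (rule measurable_compose[OF measurable_snd obs_law_measurable[OF sd]])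
  show "(\<lambda>(hx, y). return (hist_space (Suc j)) ((fst hx)(j := (snd hx, y))))
      \<in> (hist_space j \<Otimes>\<^sub>M borel) \<Otimes>\<^sub>M borel \<rightarrow>\<^sub>M prob_algebra (hist_space (Suc j))"
    using measurable_compose[OF hist_upd_measurable measurable_return_prob_space]
    by (simp add: split_beta')
qed

lemma traj_in_prob_algebra:
  assumes "\<And>j. Lam j \<in> hist_space j \<rightarrow>\<^sub>M prob_algebra borel" and "sd > 0"
  shows "traj Lam beta sd k \<in> space (prob_algebra (hist_space k))"
proof (induction k)
  case 0
  have "(\<lambda>_. undefined) \<in> space (hist_space 0 :: (nat \<Rightarrow> (real^'p) \<times> real) measure)"
    by (simp add: hist_space_def space_PiM)
  then show ?case
    by (auto simp: space_prob_algebra intro!: prob_space_return)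
next
  case (Suc k)
  have "(\<lambda>M. M \<bind> traj_step Lam beta sd k)
          \<in> prob_algebra (hist_space k) \<rightarrow>\<^sub>M prob_algebra (hist_space (Suc k))"
    by (rule measurable_bind_prob_space[OF measurable_ident_sets[OF refl]
          traj_step_measurable[OF assms]])
  from measurable_space[OF this Suc.IH] show ?case
    unfolding traj_Suc .
qed

lemma sets_traj:
  assumes "\<And>j. Lam j \<in> hist_space j \<rightarrow>\<^sub>M prob_algebra borel" and "sd > 0"
  shows "sets (traj Lam beta sd k) = sets (hist_space k)"
  using traj_in_prob_algebra[OF assms, of beta k] by (simp add: space_prob_algebra)

lemma space_traj:
  assumes "\<And>j. Lam j \<in> hist_space j \<rightarrow>\<^sub>M prob_algebra borel" and "sd > 0"
  shows "space (traj Lam beta sd k) = space (hist_space k)"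
  by (rule sets_eq_imp_space_eq[OF sets_traj[OF assms]])

lemma prob_space_traj:
  assumes "\<And>j. Lam j \<in> hist_space j \<rightarrow>\<^sub>M prob_algebra borel" and "sd > 0"
  shows "prob_space (traj Lam beta sd k)"
  using traj_in_prob_algebra[OF assms, of beta k] by (simp add: space_prob_algebra)

lemma nn_integral_obs_law_exp_tilt:
  assumes "sd > 0"
  shows "(\<integral>\<^sup>+ y. ennreal (exp (a * (y - x \<bullet> beta) - a\<^sup>2 * sd\<^sup>2 / 2)) \<partial>obs_law beta sd x) = 1"
proof -
  let ?mu = "x \<bullet> beta"
  have tilt: "normal_density ?mu sd y * exp (a * (y - ?mu) - a\<^sup>2 * sd\<^sup>2 / 2)
      = normal_density (?mu + a * sd\<^sup>2) sd y" for y
  proof -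
    have "- (y - ?mu)\<^sup>2 / (2 * sd\<^sup>2) + (a * (y - ?mu) - a\<^sup>2 * sd\<^sup>2 / 2)
        = - (y - (?mu + a * sd\<^sup>2))\<^sup>2 / (2 * sd\<^sup>2)"
      using assms by (simp add: field_simps power2_eq_square)
    then show ?thesis
      unfolding normal_density_def by (simp add: exp_add[symmetric] mult.assoc)
  qed
  have "(\<integral>\<^sup>+ y. ennreal (exp (a * (y - ?mu) - a\<^sup>2 * sd\<^sup>2 / 2)) \<partial>obs_law beta sd x)
      = (\<integral>\<^sup>+ y. ennreal (normal_density (?mu + a * sd\<^sup>2) sd y) \<partial>lborel)"
    unfolding obs_law_def
    by (subst nn_integral_density) (auto simp: tilt[symmetric] ennreal_mult intro!: nn_integral_cong)
  also have "\<dots> = 1"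
    using assms by (subst nn_integral_eq_integral) auto
  finally show ?thesis .
qed

lemma sum_hist_measurable:
  fixes g :: "real^'p::finite \<Rightarrow> real \<Rightarrow> real"
  assumes "(\<lambda>z. g (fst z) (snd z)) \<in> borel_measurable (borel \<Otimes>\<^sub>M borel)"
  shows "(\<lambda>h. \<Sum>j<k. g (fst (h j)) (snd (h j))) \<in> borel_measurable (hist_space k)"
  using measurable_compose[OF hist_component_measurable assms] by measurable

lemma nn_integral_obs_step_exp_sum:
  fixes g :: "real^'p::finite \<Rightarrow> real \<Rightarrow> real"
  assumes g: "(\<lambda>z. g (fst z) (snd z)) \<in> borel_measurable (borel \<Otimes>\<^sub>M borel)"
    and g_mgf: "(\<integral>\<^sup>+ y. ennreal (exp (g x y)) \<partial>obs_law beta sd x) \<le> 1"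
    and h: "h \<in> space (hist_space k)"
  shows "(\<integral>\<^sup>+ h'. ennreal (exp (\<Sum>j<Suc k. g (fst (h' j)) (snd (h' j))))
           \<partial>(obs_law beta sd x \<bind> (\<lambda>y. return (hist_space (Suc k)) (h(k := (x, y))))))
         \<le> ennreal (exp (\<Sum>j<k. g (fst (h j)) (snd (h j))))"
proof -
  define A where "A = (\<Sum>j<k. g (fst (h j)) (snd (h j)))"
  define F where "F h' = ennreal (exp (\<Sum>j<Suc k. g (fst (h' j)) (snd (h' j))))" for h'
  have F_measurable: "F \<in> borel_measurable (hist_space (Suc k))"
    unfolding F_def using sum_hist_measurable[OF g] by measurable
  have F_upd: "F (h(k := (x, y))) = ennreal (exp A) * ennreal (exp (g x y))" for y
    unfolding F_def A_def by (simp add: exp_add ennreal_mult)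
  have "(\<lambda>y. h(k := (x, y))) \<in> borel \<rightarrow>\<^sub>M hist_space (Suc k)"
    using measurable_compose[OF measurable_Pair1'[of x borel borel] hist_upd_measurable_fixed[OF h]]
    by simp
  from measurable_compose[OF this return_measurable]
  have ret: "(\<lambda>y. return (hist_space (Suc k)) (h(k := (x, y))))
      \<in> obs_law beta sd x \<rightarrow>\<^sub>M subprob_algebra (hist_space (Suc k))"
    by (simp add: obs_law_def cong: measurable_cong_sets)
  have gx: "(\<lambda>y. ennreal (exp (g x y))) \<in> borel_measurable (obs_law beta sd x)"
    using measurable_compose[OF measurable_Pair1'[of x borel borel] g]
    by (simp add: obs_law_def cong: measurable_cong_sets)
  have "(\<integral>\<^sup>+ h'. F h' \<partial>(obs_law beta sd x \<bind> (\<lambda>y. return (hist_space (Suc k)) (h(k := (x, y))))))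
      = (\<integral>\<^sup>+ y. ennreal (exp A) * ennreal (exp (g x y)) \<partial>obs_law beta sd x)"
    by (simp add: nn_integral_bind[OF F_measurable ret]
        nn_integral_return[OF hist_upd_in_space[OF h] F_measurable] F_upd)
  also have "\<dots> = ennreal (exp A) * (\<integral>\<^sup>+ y. ennreal (exp (g x y)) \<partial>obs_law beta sd x)"
    by (rule nn_integral_cmult[OF gx])
  also have "\<dots> \<le> ennreal (exp A)"
    using mult_left_mono[OF g_mgf, of "ennreal (exp A)"] by simp
  finally show ?thesis
    unfolding F_def A_def .
qed

lemma nn_integral_traj_step_exp_sum:
  fixes g :: "real^'p::finite \<Rightarrow> real \<Rightarrow> real"
  assumes Lam: "Lam k \<in> hist_space k \<rightarrow>\<^sub>M prob_algebra borel" and sd: "sd > 0"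
    and g: "(\<lambda>z. g (fst z) (snd z)) \<in> borel_measurable (borel \<Otimes>\<^sub>M borel)"
    and g_mgf: "\<And>x. (\<integral>\<^sup>+ y. ennreal (exp (g x y)) \<partial>obs_law beta sd x) \<le> 1"
    and h: "h \<in> space (hist_space k)"
  shows "(\<integral>\<^sup>+ h'. ennreal (exp (\<Sum>j<Suc k. g (fst (h' j)) (snd (h' j)))) \<partial>traj_step Lam beta sd k h)
           \<le> ennreal (exp (\<Sum>j<k. g (fst (h j)) (snd (h j))))"
proof -
  define F where "F h' = ennreal (exp (\<Sum>j<Suc k. g (fst (h' j)) (snd (h' j))))" for h'
  have F_measurable: "F \<in> borel_measurable (hist_space (Suc k))"
    unfolding F_def using sum_hist_measurable[OF g] by measurable
  have "Lam k h \<in> space (prob_algebra borel)"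
    using measurable_space[OF Lam h] .
  then have Lam_h: "prob_space (Lam k h)" "sets (Lam k h) = sets borel"
    by (auto simp: space_prob_algebra)
  have obs: "(\<lambda>x. obs_law beta sd x \<bind> (\<lambda>y. return (hist_space (Suc k)) (h(k := (x, y)))))
      \<in> Lam k h \<rightarrow>\<^sub>M subprob_algebra (hist_space (Suc k))"
    by (subst measurable_cong_sets[OF Lam_h(2) refl])
      (rule measurable_prob_algebraD[OF obs_step_measurable[OF sd h]])
  have "(\<integral>\<^sup>+ h'. F h' \<partial>traj_step Lam beta sd k h)
      = (\<integral>\<^sup>+ x. (\<integral>\<^sup>+ h'. F h' \<partial>(obs_law beta sd x \<bind>
           (\<lambda>y. return (hist_space (Suc k)) (h(k := (x, y)))))) \<partial>Lam k h)"
    unfolding traj_step_def by (rule nn_integral_bind[OF F_measurable obs])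
  also have "\<dots> \<le> (\<integral>\<^sup>+ x. ennreal (exp (\<Sum>j<k. g (fst (h j)) (snd (h j)))) \<partial>Lam k h)"
    unfolding F_def by (intro nn_integral_mono nn_integral_obs_step_exp_sum[OF g g_mgf h])
  also have "\<dots> = ennreal (exp (\<Sum>j<k. g (fst (h j)) (snd (h j))))"
    using prob_space.emeasure_space_1[OF Lam_h(1)] by simp
  finally show ?thesis
    unfolding F_def .
qed

lemma nn_integral_traj_exp_sum_le_1:
  fixes g :: "real^'p::finite \<Rightarrow> real \<Rightarrow> real"
  assumes Lam: "\<And>j. Lam j \<in> hist_space j \<rightarrow>\<^sub>M prob_algebra borel" and sd: "sd > 0"
    and g: "(\<lambda>z. g (fst z) (snd z)) \<in> borel_measurable (borel \<Otimes>\<^sub>M borel)"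
    and g_mgf: "\<And>x. (\<integral>\<^sup>+ y. ennreal (exp (g x y)) \<partial>obs_law beta sd x) \<le> 1"
  shows "(\<integral>\<^sup>+ h. ennreal (exp (\<Sum>j<k. g (fst (h j)) (snd (h j)))) \<partial>traj Lam beta sd k) \<le> 1"
proof (induction k)
  case 0
  then show ?case
    by (simp split: split_indicator)
next
  case (Suc k)
  define F where "F h = ennreal (exp (\<Sum>j<Suc k. g (fst (h j)) (snd (h j))))" for h
  have F_measurable: "F \<in> borel_measurable (hist_space (Suc k))"
    unfolding F_def using sum_hist_measurable[OF g] by measurable
  have step: "traj_step Lam beta sd k \<in> traj Lam beta sd k \<rightarrow>\<^sub>M subprob_algebra (hist_space (Suc k))"
    by (subst measurable_cong_sets[OF sets_traj[OF Lam sd] refl])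
      (rule measurable_prob_algebraD[OF traj_step_measurable[OF Lam sd]])
  have "(\<integral>\<^sup>+ h. F h \<partial>traj Lam beta sd (Suc k))
      = (\<integral>\<^sup>+ h. (\<integral>\<^sup>+ h'. F h' \<partial>traj_step Lam beta sd k h) \<partial>traj Lam beta sd k)"
    unfolding traj_Suc by (rule nn_integral_bind[OF F_measurable step])
  also have "\<dots> \<le> (\<integral>\<^sup>+ h. ennreal (exp (\<Sum>j<k. g (fst (h j)) (snd (h j)))) \<partial>traj Lam beta sd k)"
    unfolding F_def
    by (intro nn_integral_mono nn_integral_traj_step_exp_sum[OF Lam sd g g_mgf])
      (simp add: space_traj[OF Lam sd])
  also have "\<dots> \<le> 1"
    by (rule Suc.IH)
  finally show ?case
    unfolding F_def .
qed

lemma measure_traj_sum_ge_le: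
  fixes g :: "real^'p::finite \<Rightarrow> real \<Rightarrow> real" and k :: nat and t :: real
  assumes Lam: "\<And>j. Lam j \<in> hist_space j \<rightarrow>\<^sub>M prob_algebra borel" and sd: "sd > 0"
    and g: "(\<lambda>z. g (fst z) (snd z)) \<in> borel_measurable (borel \<Otimes>\<^sub>M borel)"
    and g_mgf: "\<And>x. (\<integral>\<^sup>+ y. ennreal (exp (g x y)) \<partial>obs_law beta sd x) \<le> 1"
  defines "E \<equiv> {h \<in> space (traj Lam beta sd k). t \<le> (\<Sum>j<k. g (fst (h j)) (snd (h j)))}"
  shows "E \<in> sets (traj Lam beta sd k)" and "measure (traj Lam beta sd k) E \<le> exp (- t)"
proof -
  let ?P = "traj Lam beta sd k"
  interpret P: prob_space ?P
    by (rule prob_space_traj[OF Lam sd])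
  let ?u = "\<lambda>h. \<Sum>j<k. g (fst (h j)) (snd (h j))"
  have "?u \<in> borel_measurable ?P"
    unfolding measurable_cong_sets[OF sets_traj[OF Lam sd] refl] by (rule sum_hist_measurable[OF g])
  then show E: "E \<in> sets ?P"
    unfolding E_def by measurable
  have "ennreal (exp t) * emeasure ?P E = (\<integral>\<^sup>+ h. ennreal (exp t) * indicator E h \<partial>?P)"
    using E by (simp add: nn_integral_cmult_indicator)
  also have "\<dots> \<le> (\<integral>\<^sup>+ h. ennreal (exp (?u h)) \<partial>?P)"
    by (intro nn_integral_mono) (auto simp: E_def split: split_indicator)
  also have "\<dots> \<le> 1"
    by (rule nn_integral_traj_exp_sum_le_1[OF Lam sd g g_mgf])
  finally have "exp t * measure ?P E \<le> 1"
    by (simp add: P.emeasure_eq_measure ennreal_mult[symmetric])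
  then show "measure ?P E \<le> exp (- t)"
    by (simp add: exp_minus field_simps)
qed

section \<open>Gaussians with diagonal covariance\<close>

lemma exp_neg_le_inverse:
  assumes "(t::real) > 0"
  shows "exp (- t) \<le> 1 / t"
proof -
  have "t \<le> exp t"
    using exp_ge_add_one_self[of t] by linarith
  then show ?thesis
    using assms by (simp add: exp_minus field_simps)
qed

lemma exp_tail_le:
  fixes C :: real
  assumes "c > 0" and "\<eta> > 0"
  obtains K where "K \<ge> K0" "K > 0" "C * exp (- (c * K)) \<le> \<eta>"
proof -
  define K where "K = max (max K0 1) (\<bar>C\<bar> / (c * \<eta>))"
  have K: "K \<ge> K0" "K > 0" "\<bar>C\<bar> / (c * \<eta>) \<le> K"
    by (auto simp: K_def)
  have "C * exp (- (c * K)) \<le> \<bar>C\<bar> * exp (- (c * K))"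
    by (intro mult_right_mono) auto
  also have "\<dots> \<le> \<bar>C\<bar> * (1 / (c * K))"
    using assms K by (intro mult_left_mono exp_neg_le_inverse) auto
  also have "\<dots> \<le> \<eta>"
    using assms K(2,3) by (simp add: field_simps)
  finally show ?thesis
    using K that by blast
qed

lemma exp_tail_width_le:
  fixes C :: real
  assumes "r > 0" and "\<eta> > 0"
  obtains \<delta> where "\<delta> > 0" "C * exp (- (r / 2)\<^sup>2 / (4 * \<delta>\<^sup>2)) \<le> \<eta>"
proof -
  have "(r / 2)\<^sup>2 / 4 > 0"
    using assms(1) by simp
  then obtain K where K: "K > 0" and tail: "C * exp (- ((r / 2)\<^sup>2 / 4 * K)) \<le> \<eta>"
    using exp_tail_le[OF _ assms(2), of _ 0 C] by blast
  have "1 / sqrt K > 0" and "(1 / sqrt K)\<^sup>2 = 1 / K"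
    using K by (simp_all add: power_divide)
  moreover from this(2) have "- (r / 2)\<^sup>2 / (4 * (1 / sqrt K)\<^sup>2) = - ((r / 2)\<^sup>2 / 4 * K)"
    by simp
  ultimately show ?thesis
    using that[of "1 / sqrt K"] tail by simp
qed

definition diag_normal_density :: "real^'p::finite \<Rightarrow> ('p \<Rightarrow> real) \<Rightarrow> real^'p \<Rightarrow> real" where
  "diag_normal_density c s b = (\<Prod>i\<in>UNIV. normal_density (c$i) (s i) (b$i))"

lemma diag_normal_density_nonneg: "diag_normal_density c s b \<ge> 0"
  unfolding diag_normal_density_def by (intro prod_nonneg) auto

lemma diag_normal_density_measurable[measurable]: "diag_normal_density c s \<in> borel_measurable borel"
  unfolding diag_normal_density_def by measurable

lemma nn_integral_lborel_vec_prod: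
  fixes f :: "'p::finite \<Rightarrow> real \<Rightarrow> ennreal"
  assumes [measurable]: "\<And>i. f i \<in> borel_measurable borel"
  shows "(\<integral>\<^sup>+ b. (\<Prod>i\<in>UNIV. f i ((b::real^'p)$i)) \<partial>lborel) = (\<Prod>i\<in>UNIV. \<integral>\<^sup>+ x. f i x \<partial>lborel)"
proof -
  have inj: "inj (\<lambda>i::'p. axis i (1::real))"
    by (auto simp: inj_on_def axis_eq_axis)
  have Basis: "(Basis :: (real^'p) set) = range (\<lambda>i. axis i 1)"
    by (auto simp: Basis_vec_def)
  have index: "axis_index (axis i (1::real)) = i" for i :: 'p
    by (metis Basis axis_eq_axis axis_index axis_inverse one_neq_zero rangeI)
  have "(\<integral>\<^sup>+ b. (\<Prod>u\<in>Basis. f (axis_index u) ((b::real^'p) \<bullet> u)) \<partial>lborel)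
      = (\<Prod>u\<in>(Basis :: (real^'p) set). (\<integral>\<^sup>+x. f (axis_index u) x \<partial>lborel))"
    by (rule nn_integral_lborel_prod) auto
  then show ?thesis
    unfolding Basis using inj by (simp add: prod.reindex index cart_eq_inner_axis[symmetric])
qed

lemma nn_integral_diag_normal_density:
  assumes "\<And>i. s i > 0"
  shows "(\<integral>\<^sup>+ b. ennreal (diag_normal_density c s b) \<partial>lborel) = 1"
proof -
  have "(\<integral>\<^sup>+ b. ennreal (diag_normal_density c s b) \<partial>lborel)
      = (\<Prod>i\<in>UNIV. \<integral>\<^sup>+ x. ennreal (normal_density (c$i) (s i) x) \<partial>lborel)"
    unfolding diag_normal_density_def prod_ennreal[symmetric, OF normal_density_nonneg]
    by (rule nn_integral_lborel_vec_prod) simp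
  also have "\<dots> = 1"
    using assms by (simp add: nn_integral_eq_integral)
  finally show ?thesis .
qed

lemma
  assumes "\<And>i. s i > 0"
  shows integrable_diag_normal_density: "integrable lborel (diag_normal_density c s)"
    and integral_diag_normal_density: "(\<integral>b. diag_normal_density c s b \<partial>lborel) = 1"
proof -
  have nn: "(\<integral>\<^sup>+ b. ennreal (diag_normal_density c s b) \<partial>lborel) = 1"
    using assms by (rule nn_integral_diag_normal_density)
  then show int: "integrable lborel (diag_normal_density c s)"
    using diag_normal_density_nonneg by (intro integrableI_nonneg) auto
  have "ennreal (\<integral>b. diag_normal_density c s b \<partial>lborel) = 1"
    using nn int diag_normal_density_nonneg by (subst (asm) nn_integral_eq_integral) auto
  then show "(\<integral>b. diag_normal_density c s b \<partial>lborel) = 1"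
    by simp
qed

lemma integrable_bounded_mult_diag_normal_density:
  assumes [measurable]: "f \<in> borel_measurable borel" and f: "\<And>b. \<bar>f b\<bar> \<le> M"
    and s: "\<And>i. s i > 0"
  shows "integrable lborel (\<lambda>b. f b * diag_normal_density c s b)"
proof (rule Bochner_Integration.integrable_bound)
  have "integrable lborel (diag_normal_density c s)"
    using s by (rule integrable_diag_normal_density)
  then show "integrable lborel (\<lambda>b. M * diag_normal_density c s b)"
    by simp
  show "AE b in lborel. norm (f b * diag_normal_density c s b) \<le> norm (M * diag_normal_density c s b)"
    using f diag_normal_density_nonneg
    by (intro AE_I2) (simp add: abs_mult mult_right_mono order_trans[OF _ abs_ge_self])
qed simp

lemma normal_density_eq_exp_mult_wider:
  assumes "\<sigma> > 0"
  shows "normal_density \<mu> \<sigma> x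
           = sqrt 2 * exp (- (x - \<mu>)\<^sup>2 / (4 * \<sigma>\<^sup>2)) * normal_density \<mu> (sqrt 2 * \<sigma>) x"
proof -
  have "exp (- (x - \<mu>)\<^sup>2 / (2 * \<sigma>\<^sup>2))
      = exp (- (x - \<mu>)\<^sup>2 / (4 * \<sigma>\<^sup>2)) * exp (- (x - \<mu>)\<^sup>2 / (2 * (sqrt 2 * \<sigma>)\<^sup>2))"
    unfolding exp_add[symmetric] using assms by (simp add: field_simps)
  moreover have "sqrt (2 * pi * (sqrt 2 * \<sigma>)\<^sup>2) = sqrt 2 * sqrt (2 * pi * \<sigma>\<^sup>2)"
    by (simp add: power_mult_distrib real_sqrt_mult)
  ultimately show ?thesis
    unfolding normal_density_def using assms by (simp add: field_simps)
qed

lemma diag_normal_density_le_tail: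
  fixes c :: "real^'p::finite"
  assumes s: "\<And>i. 0 < s i" "\<And>i. s i \<le> \<delta>"
  shows "diag_normal_density c s b
    \<le> sqrt 2 ^ CARD('p) * exp (- (norm (b - c))\<^sup>2 / (4 * \<delta>\<^sup>2))
        * diag_normal_density c (\<lambda>i. sqrt 2 * s i) b"
proof -
  have "diag_normal_density c s b = (\<Prod>i\<in>UNIV. sqrt 2 * exp (- (b$i - c$i)\<^sup>2 / (4 * (s i)\<^sup>2))
      * normal_density (c$i) (sqrt 2 * s i) (b$i))"
    unfolding diag_normal_density_def using s(1) by (intro prod.cong refl normal_density_eq_exp_mult_wider)
  also have "\<dots> \<le> (\<Prod>i\<in>UNIV. sqrt 2 * exp (- (b$i - c$i)\<^sup>2 / (4 * \<delta>\<^sup>2))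
      * normal_density (c$i) (sqrt 2 * s i) (b$i))"
  proof (intro prod_mono conjI mult_right_mono mult_left_mono)
    fix i
    show "exp (- (b$i - c$i)\<^sup>2 / (4 * (s i)\<^sup>2)) \<le> exp (- (b$i - c$i)\<^sup>2 / (4 * \<delta>\<^sup>2))"
      using s(1)[of i] s(2)[of i]
      by (simp add: divide_left_mono mult_left_mono power_mono)
  qed auto
  also have "\<dots> = sqrt 2 ^ CARD('p) * (\<Prod>i\<in>UNIV. exp (- (b$i - c$i)\<^sup>2 / (4 * \<delta>\<^sup>2)))
      * diag_normal_density c (\<lambda>i. sqrt 2 * s i) b"
    unfolding diag_normal_density_def by (simp add: prod.distrib)
  also have "(\<Prod>i\<in>UNIV. exp (- (b$i - c$i)\<^sup>2 / (4 * \<delta>\<^sup>2))) = exp (- (norm (b - c))\<^sup>2 / (4 * \<delta>\<^sup>2))"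
    unfolding power2_norm_eq_inner inner_vec_def
    by (simp add: exp_sum[symmetric] sum_divide_distrib[symmetric] sum_negf power2_eq_square)
  finally show ?thesis .
qed

lemma diag_normal_density_le_far_tail:
  fixes c :: "real^'p::finite"
  assumes s: "\<And>i. 0 < s i" "\<And>i. s i \<le> \<delta>" and r: "0 \<le> r" "r \<le> norm (b - c)"
  shows "diag_normal_density c s b
    \<le> sqrt 2 ^ CARD('p) * exp (- r\<^sup>2 / (4 * \<delta>\<^sup>2)) * diag_normal_density c (\<lambda>i. sqrt 2 * s i) b"
proof -
  have "exp (- (norm (b - c))\<^sup>2 / (4 * \<delta>\<^sup>2)) \<le> exp (- r\<^sup>2 / (4 * \<delta>\<^sup>2))"
    using r by (auto intro!: divide_right_mono power_mono)
  then have "sqrt 2 ^ CARD('p) * exp (- (norm (b - c))\<^sup>2 / (4 * \<delta>\<^sup>2)) * diag_normal_density c (\<lambda>i. sqrt 2 * s i) b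
      \<le> sqrt 2 ^ CARD('p) * exp (- r\<^sup>2 / (4 * \<delta>\<^sup>2)) * diag_normal_density c (\<lambda>i. sqrt 2 * s i) b"
    using diag_normal_density_nonneg by (intro mult_right_mono mult_left_mono) auto
  moreover have "diag_normal_density c s b
      \<le> sqrt 2 ^ CARD('p) * exp (- (norm (b - c))\<^sup>2 / (4 * \<delta>\<^sup>2)) * diag_normal_density c (\<lambda>i. sqrt 2 * s i) b"
    using s by (rule diag_normal_density_le_tail)
  ultimately show ?thesis
    by linarith
qed

lemma local_deviation_mult_diag_normal_le:
  fixes u :: "real^'p::finite \<Rightarrow> real" and c beta0 :: "real^'p"
  assumes u_nonneg: "\<And>b. 0 \<le> u b" and u_bounded: "\<And>b. u b \<le> M"
    and r: "r > 0" and u_local: "\<And>b. dist b beta0 < r \<Longrightarrow> u b \<le> \<eta>"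
    and c: "dist c beta0 \<le> r / 2" and s: "\<And>i. 0 < s i" "\<And>i. s i \<le> \<delta>"
  shows "u b * diag_normal_density c s b
    \<le> \<eta> * diag_normal_density c s b
      + M * sqrt 2 ^ CARD('p) * exp (- (r / 2)\<^sup>2 / (4 * \<delta>\<^sup>2)) * diag_normal_density c (\<lambda>i. sqrt 2 * s i) b"
    (is "_ \<le> _ + ?tail")
proof -
  have "0 \<le> M" "0 \<le> \<eta>"
    using u_nonneg[of beta0] u_bounded[of beta0] u_local[of beta0] r by auto
  then have "0 \<le> \<eta> * diag_normal_density c s b" "0 \<le> ?tail"
    using diag_normal_density_nonneg[of c s b] diag_normal_density_nonneg[of c "\<lambda>i. sqrt 2 * s i" b]
    by simp_all
  moreover consider "dist b beta0 < r" | "r / 2 \<le> norm (b - c)"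
    using c norm_triangle_ineq[of "b - c" "c - beta0"] by (force simp: dist_norm)
  then have "u b * diag_normal_density c s b \<le> \<eta> * diag_normal_density c s b
      \<or> u b * diag_normal_density c s b \<le> ?tail"
  proof cases
    case 1
    then show ?thesis
      using u_local[OF 1] diag_normal_density_nonneg[of c s b] by (simp add: mult_right_mono)
  next
    case 2
    then have "diag_normal_density c s b
        \<le> sqrt 2 ^ CARD('p) * exp (- (r / 2)\<^sup>2 / (4 * \<delta>\<^sup>2)) * diag_normal_density c (\<lambda>i. sqrt 2 * s i) b"
      using s r by (intro diag_normal_density_le_far_tail) auto
    then show ?thesis
      using u_nonneg[of b] u_bounded[of b] diag_normal_density_nonneg[of c s b] \<open>0 \<le> M\<close>
      by (auto simp: mult.assoc intro: mult_mono)
  qed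
  ultimately show ?thesis
    by linarith
qed

lemma integral_local_deviation_diag_normal_le:
  fixes u :: "real^'p::finite \<Rightarrow> real" and c beta0 :: "real^'p"
  assumes [measurable]: "u \<in> borel_measurable borel"
    and u_nonneg: "\<And>b. 0 \<le> u b" and u_bounded: "\<And>b. u b \<le> M"
    and r: "r > 0" and u_local: "\<And>b. dist b beta0 < r \<Longrightarrow> u b \<le> \<eta>"
    and c: "dist c beta0 \<le> r / 2" and s: "\<And>i. 0 < s i" "\<And>i. s i \<le> \<delta>"
  shows "(\<integral>b. u b * diag_normal_density c s b \<partial>lborel)
           \<le> \<eta> + M * sqrt 2 ^ CARD('p) * exp (- (r / 2)\<^sup>2 / (4 * \<delta>\<^sup>2))"
proof -
  let ?s2 = "\<lambda>i. sqrt 2 * s i"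
  let ?tail = "M * sqrt 2 ^ CARD('p) * exp (- (r / 2)\<^sup>2 / (4 * \<delta>\<^sup>2))"
  have s2: "0 < ?s2 i" for i
    using s(1)[of i] by simp
  have "(\<integral>b. u b * diag_normal_density c s b \<partial>lborel)
      \<le> (\<integral>b. \<eta> * diag_normal_density c s b + ?tail * diag_normal_density c ?s2 b \<partial>lborel)"
    using integrable_bounded_mult_diag_normal_density[of u M s c] u_nonneg u_bounded s
      integrable_diag_normal_density[of s c] integrable_diag_normal_density[of ?s2 c] s2
      local_deviation_mult_diag_normal_le[OF u_nonneg u_bounded r u_local c s]
    by (intro integral_mono) (auto simp: mult.assoc)
  also have "\<dots> = \<eta> + ?tail"
    using integrable_diag_normal_density[of s c] integrable_diag_normal_density[of ?s2 c]
      integral_diag_normal_density[of s c] integral_diag_normal_density[of ?s2 c] s s2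
    by simp
  finally show ?thesis .
qed

lemma integral_abs_normalised_diff_le:
  fixes f \<phi> :: "'a \<Rightarrow> real"
  assumes f: "integrable M f" and \<phi>: "integrable M \<phi>" "\<And>x. 0 \<le> \<phi> x" "(\<integral>x. \<phi> x \<partial>M) = 1"
    and p0: "p0 > 0" and D: "(\<integral>x. \<bar>f x - p0 * \<phi> x\<bar> \<partial>M) \<le> D" "D \<le> p0 / 4"
  shows "(\<integral>x. \<bar>f x / (\<integral>x. f x \<partial>M) - \<phi> x\<bar> \<partial>M) \<le> 8 * D / (3 * p0)"
proof -
  define Z where "Z = (\<integral>x. f x \<partial>M)"
  have "Z - p0 = (\<integral>x. f x - p0 * \<phi> x \<partial>M)"
    using f \<phi> by (simp add: Z_def)
  also have "\<bar>\<dots>\<bar> \<le> D"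
    using integral_abs_bound[of M "\<lambda>x. f x - p0 * \<phi> x"] D(1) by linarith
  finally have Z_close: "\<bar>Z - p0\<bar> \<le> D" .
  then have Z_big: "Z \<ge> 3 / 4 * p0"
    using D(2) by linarith
  have pointwise: "\<bar>f x / Z - \<phi> x\<bar> \<le> (\<bar>f x - p0 * \<phi> x\<bar> + \<bar>Z - p0\<bar> * \<phi> x) / Z" for x
  proof -
    have "f x / Z - \<phi> x = ((f x - p0 * \<phi> x) + (p0 - Z) * \<phi> x) / Z"
      using Z_big p0 by (simp add: field_simps)
    then show ?thesis
      using Z_big p0 \<phi>(2)[of x]
      by (simp add: abs_mult divide_right_mono abs_triangle_ineq[THEN order_trans] abs_minus_commute)
  qed
  have "(\<integral>x. \<bar>f x / Z - \<phi> x\<bar> \<partial>M) \<le> (\<integral>x. (\<bar>f x - p0 * \<phi> x\<bar> + \<bar>Z - p0\<bar> * \<phi> x) / Z \<partial>M)"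
    using f \<phi> by (intro integral_mono pointwise) auto
  also have "\<dots> = ((\<integral>x. \<bar>f x - p0 * \<phi> x\<bar> \<partial>M) + \<bar>Z - p0\<bar>) / Z"
    using f \<phi> by simp
  also have "\<dots> \<le> (D + D) / (3 / 4 * p0)"
    using D Z_close Z_big p0 by (intro frac_le) auto
  also have "\<dots> = 8 * D / (3 * p0)"
    by simp
  finally show ?thesis
    by (simp add: Z_def)
qed

lemma L1_normalised_prior_mult_diag_normal_le:
  fixes prior :: "real^'p::finite \<Rightarrow> real"
  assumes nonneg: "\<And>b. prior b \<ge> 0" and cont: "continuous_on UNIV prior"
    and bounded: "\<And>b. prior b \<le> B" and pos: "prior beta0 > 0" and e: "e > 0"
  obtains \<delta> \<epsilon> where "\<delta> > 0" "\<epsilon> > 0"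
    "\<And>c s. (\<And>i. 0 < s i) \<Longrightarrow> (\<And>i. s i \<le> \<delta>) \<Longrightarrow> dist c beta0 \<le> \<epsilon> \<Longrightarrow>
       (\<integral>b. \<bar>prior b * diag_normal_density c s b / (\<integral>b. prior b * diag_normal_density c s b \<partial>lborel)
              - diag_normal_density c s b\<bar> \<partial>lborel) \<le> e"
proof -
  define p0 where "p0 = prior beta0"
  define D where "D = min (p0 / 4) (3 * e * p0 / 8)"
  define \<eta> where "\<eta> = D / 2"
  define C where "C = (B + p0) * sqrt 2 ^ CARD('p)"
  have p0: "p0 > 0"
    using pos by (simp add: p0_def)
  have D: "D > 0" "D \<le> p0 / 4" "8 * D / (3 * p0) \<le> e"
    using p0 e by (auto simp: D_def field_simps min_def)
  have \<eta>: "\<eta> > 0"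
    using D by (simp add: \<eta>_def)
  obtain r where r: "r > 0" and near: "\<And>b. dist b beta0 < r \<Longrightarrow> \<bar>prior b - p0\<bar> < \<eta>"
    using cont \<eta> unfolding continuous_on_iff p0_def by (metis UNIV_I dist_commute dist_real_def)
  obtain \<delta> where \<delta>: "\<delta> > 0" and tail: "C * exp (- (r / 2)\<^sup>2 / (4 * \<delta>\<^sup>2)) \<le> \<eta>"
    using exp_tail_width_le[OF r \<eta>] by blast
  show ?thesis
  proof (rule that[OF \<delta>, of "r / 2"])
    show "r / 2 > 0"
      using r by simp
    fix c :: "real^'p" and s :: "'p \<Rightarrow> real"
    assume s: "\<And>i. 0 < s i" "\<And>i. s i \<le> \<delta>" and c: "dist c beta0 \<le> r / 2"
    have prior_measurable: "prior \<in> borel_measurable borel"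
      using cont by (rule borel_measurable_continuous_onI)
    have "(\<integral>b. \<bar>prior b * diag_normal_density c s b - p0 * diag_normal_density c s b\<bar> \<partial>lborel)
        = (\<integral>b. \<bar>prior b - p0\<bar> * diag_normal_density c s b \<partial>lborel)"
      by (simp add: left_diff_distrib[symmetric] abs_mult diag_normal_density_nonneg)
    also have "\<dots> \<le> \<eta> + (B + p0) * sqrt 2 ^ CARD('p) * exp (- (r / 2)\<^sup>2 / (4 * \<delta>\<^sup>2))"
    proof (rule integral_local_deviation_diag_normal_le[OF _ _ _ r _ c s])
      show "\<bar>prior b - p0\<bar> \<le> B + p0" for b
        using nonneg[of b] bounded[of b] p0 by linarith
      show "\<bar>prior b - p0\<bar> \<le> \<eta>" if "dist b beta0 < r" for b
        using near[OF that] by simp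
    qed (use prior_measurable in auto)
    also have "\<dots> \<le> D"
      using tail by (simp add: C_def \<eta>_def)
    finally have L1: "(\<integral>b. \<bar>prior b * diag_normal_density c s b - p0 * diag_normal_density c s b\<bar> \<partial>lborel) \<le> D" .
    have "integrable lborel (\<lambda>b. prior b * diag_normal_density c s b)"
      using prior_measurable nonneg bounded s
      by (intro integrable_bounded_mult_diag_normal_density[where M=B]) auto
    from integral_abs_normalised_diff_le[OF this integrable_diag_normal_density[OF s(1)]
        diag_normal_density_nonneg integral_diag_normal_density[OF s(1)] p0 L1 D(2)]
    show "(\<integral>b. \<bar>prior b * diag_normal_density c s b / (\<integral>b. prior b * diag_normal_density c s b \<partial>lborel)
        - diag_normal_density c s b\<bar> \<partial>lborel) \<le> e"
      using D(3) by linarith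
  qed
qed

lemma measure_density_eq_integral_indicator:
  fixes f :: "'a \<Rightarrow> real"
  assumes f: "integrable M f" "\<And>x. f x \<ge> 0" and A: "A \<in> sets M"
  shows "measure (density M f) A = (\<integral>x. indicator A x * f x \<partial>M)"
proof -
  have "emeasure (density M f) A = (\<integral>\<^sup>+ x. ennreal (indicator A x * f x) \<partial>M)"
    using A f by (subst emeasure_density) (auto intro!: nn_integral_cong split: split_indicator)
  also have "\<dots> = ennreal (\<integral>x. indicator A x * f x \<partial>M)"
    using f A integrable_real_mult_indicator[of A M f]
    by (intro nn_integral_eq_integral) (auto simp: mult.commute)
  finally show ?thesis
    unfolding measure_def using f(2) by (simp add: integral_nonneg_AE)
qed

lemma abs_tv_dist_density_le_L1:
  fixes f g :: "'a \<Rightarrow> real"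
  assumes f: "integrable M f" "\<And>x. f x \<ge> 0" and g: "integrable M g" "\<And>x. g x \<ge> 0"
  shows "\<bar>tv_dist (density M f) (density M g)\<bar> \<le> (\<integral>x. \<bar>f x - g x\<bar> \<partial>M)"
proof -
  let ?d = "\<lambda>A. \<bar>measure (density M f) A - measure (density M g) A\<bar>"
  have le: "?d A \<le> (\<integral>x. \<bar>f x - g x\<bar> \<partial>M)" if A: "A \<in> sets (density M f)" for A
  proof -
    have int: "integrable M (\<lambda>x. indicator A x * h x)" if "integrable M h" for h :: "'a \<Rightarrow> real"
      using A that integrable_real_mult_indicator[of A M h] by (simp add: mult.commute)
    have "?d A = \<bar>\<integral>x. indicator A x * (f x - g x) \<partial>M\<bar>"
      using A f g int
      by (simp add: measure_density_eq_integral_indicator right_diff_distrib)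
    also have "\<dots> \<le> (\<integral>x. \<bar>indicator A x * (f x - g x)\<bar> \<partial>M)"
      by (rule integral_abs_bound)
    also have "\<dots> \<le> (\<integral>x. \<bar>f x - g x\<bar> \<partial>M)"
      using f g int by (intro integral_mono) (auto simp: abs_mult split: split_indicator)
    finally show ?thesis .
  qed
  then have "tv_dist (density M f) (density M g) \<le> (\<integral>x. \<bar>f x - g x\<bar> \<partial>M)"
    unfolding tv_dist_def by (intro cSUP_least) auto
  moreover have "0 \<le> tv_dist (density M f) (density M g)"
    unfolding tv_dist_def using le by (intro cSUP_upper2[of _ _ "{}"] bdd_aboveI2) auto
  ultimately show ?thesis
    by simp
qed

section \<open>Basis designs\<close>

definition diag_mat :: "('p::finite \<Rightarrow> real) \<Rightarrow> real^'p^'p" where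
  "diag_mat d = (\<chi> a b. if a = b then d a else 0)"

lemma diag_mat_mult: "diag_mat d ** diag_mat e = diag_mat (\<lambda>i. d i * e i)"
  unfolding diag_mat_def matrix_matrix_mult_def vec_eq_iff
  by (auto simp: if_distrib[of "\<lambda>t. t * _"] cong: if_cong)

lemma mat_1_eq_diag_mat: "mat 1 = diag_mat (\<lambda>_. 1)"
  by (simp add: diag_mat_def mat_def)

lemma diag_mat_mult_vec: "diag_mat d *v v = (\<chi> i. d i * v$i)"
  unfolding diag_mat_def matrix_vector_mult_def vec_eq_iff
  by (auto simp: if_distrib[of "\<lambda>t. t * _"] cong: if_cong)

lemma scaleR_diag_mat: "c *\<^sub>R diag_mat d = diag_mat (\<lambda>i. c * d i)"
  by (simp add: diag_mat_def vec_eq_iff)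

lemma det_diag_mat: "det (diag_mat d) = (\<Prod>i\<in>UNIV. d i)"
  by (subst det_diagonal) (auto simp: diag_mat_def)

lemma matrix_inv_eqI:
  fixes A B :: "'a::semiring_1^'n^'n"
  assumes AB: "A ** B = mat 1" and BA: "B ** A = mat 1"
  shows "matrix_inv A = B"
proof -
  let ?A' = "matrix_inv A"
  have A': "A ** ?A' = mat 1 \<and> ?A' ** A = mat 1"
    unfolding matrix_inv_def using AB BA by (intro someI_ex[of "\<lambda>A'. A ** A' = mat 1 \<and> A' ** A = mat 1"]) blast
  have "?A' = (?A' ** A) ** B"
    using AB by (simp add: matrix_mul_assoc[symmetric])
  then show ?thesis
    using A' by simp
qed

lemma matrix_inv_diag_mat:
  assumes "\<And>i. d i \<noteq> 0"
  shows "matrix_inv (diag_mat d) = diag_mat (\<lambda>i. 1 / d i)"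
  using assms by (intro matrix_inv_eqI) (simp_all add: diag_mat_mult mat_1_eq_diag_mat)

lemma eigenvalues_diag_mat: "eigenvalues (diag_mat d) = range d"
proof
  show "range d \<subseteq> eigenvalues (diag_mat d)"
    unfolding eigenvalues_def
    by (auto intro!: exI[of _ "axis _ 1"] simp: diag_mat_mult_vec vec_eq_iff axis_def)
  show "eigenvalues (diag_mat d) \<subseteq> range d"
  proof
    fix c assume "c \<in> eigenvalues (diag_mat d)"
    then obtain v where v: "v \<noteq> 0" "diag_mat d *v v = c *\<^sub>R v"
      unfolding eigenvalues_def by auto
    then obtain k where k: "v $ k \<noteq> 0"
      by (metis vec_eq_iff zero_index)
    have "d k * v $ k = c * v $ k"
      using v(2) by (simp add: diag_mat_mult_vec vec_eq_iff)
    then show "c \<in> range d"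
      using k by auto
  qed
qed

lemma lambda_min_diag_mat_le: "lambda_min (diag_mat d) \<le> d i"
  unfolding lambda_min_def eigenvalues_diag_mat by (rule Min_le) auto

lemma mvn_diag_mat:
  fixes c :: "real^'p::finite"
  assumes s: "\<And>i. s i > 0"
  shows "mvn c (diag_mat (\<lambda>i. (s i)\<^sup>2)) = density lborel (diag_normal_density c s)"
proof -
  have inv: "matrix_inv (diag_mat (\<lambda>i. (s i)\<^sup>2)) = diag_mat (\<lambda>i. 1 / (s i)\<^sup>2)"
    using s by (intro matrix_inv_diag_mat) (simp add: less_imp_neq[symmetric])
  have const: "(2 * pi) powr (- real CARD('p) / 2) * det (diag_mat (\<lambda>i. (s i)\<^sup>2)) powr (- 1 / 2)
      = (\<Prod>i\<in>UNIV. 1 / sqrt (2 * pi * (s i)\<^sup>2))"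
  proof -
    have "(2 * pi) powr (- real CARD('p) / 2) = (\<Prod>i\<in>(UNIV::'p set). (2 * pi) powr (- 1 / 2))"
      by (simp add: powr_power)
    moreover have "det (diag_mat (\<lambda>i. (s i)\<^sup>2)) powr (- 1 / 2) = (\<Prod>i\<in>UNIV. ((s i)\<^sup>2) powr (- 1 / 2))"
      by (simp add: det_diag_mat prod_powr_distrib)
    moreover have "(2 * pi) powr (- 1 / 2) * ((s i)\<^sup>2) powr (- 1 / 2) = 1 / sqrt (2 * pi * (s i)\<^sup>2)" for i
    proof -
      have "1 / sqrt (2 * pi * (s i)\<^sup>2) = (2 * pi * (s i)\<^sup>2) powr (- 1 / 2)"
        using s[of i] by (simp add: powr_minus_divide powr_half_sqrt[symmetric])
      then show ?thesis
        by (simp add: powr_mult)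
    qed
    ultimately show ?thesis
      by (simp only: prod.distrib[symmetric])
  qed
  have expo: "exp (- (1 / 2) * ((b - c) \<bullet> (diag_mat (\<lambda>i. 1 / (s i)\<^sup>2) *v (b - c))))
      = (\<Prod>i\<in>UNIV. exp (- (b$i - c$i)\<^sup>2 / (2 * (s i)\<^sup>2)))" for b
  proof -
    have "- (1 / 2) * ((b - c) \<bullet> (diag_mat (\<lambda>i. 1 / (s i)\<^sup>2) *v (b - c)))
        = (\<Sum>i\<in>UNIV. - (b$i - c$i)\<^sup>2 / (2 * (s i)\<^sup>2))"
      unfolding diag_mat_mult_vec inner_vec_def sum_distrib_left
      by (intro sum.cong refl) (simp add: power2_eq_square field_simps, simp add: minus_divide_left)
    then show ?thesis
      by (simp add: exp_sum)
  qed
  show ?thesis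
    unfolding mvn_def inv const expo diag_normal_density_def normal_density_def prod.distrib
    by (simp only:)
qed

definition basis_design :: "(nat \<Rightarrow> (real^'p::finite) \<times> real) \<Rightarrow> nat \<Rightarrow> bool" where
  "basis_design h m \<longleftrightarrow> (\<forall>j<m. fst (h j) \<in> range (\<lambda>i. axis i 1))"

text \<open>For a basis design, the number of times coordinate i has been sampled.\<close>

definition arm_count :: "(nat \<Rightarrow> (real^'p::finite) \<times> real) \<Rightarrow> nat \<Rightarrow> 'p \<Rightarrow> real" where
  "arm_count h m i = (\<Sum>j<m. (fst (h j) $ i)\<^sup>2)"

lemma gram_basis_design:
  assumes "basis_design h m"
  shows "gram h m = diag_mat (arm_count h m)"
proof -
  have entry: "fst (h j) $ a * fst (h j) $ b = (if a = b then (fst (h j) $ a)\<^sup>2 else 0)"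
    if j: "j < m" for a b j
  proof -
    obtain k where "fst (h j) = axis k 1"
      using assms j by (auto simp: basis_design_def)
    then show ?thesis
      by (simp add: axis_def power2_eq_square)
  qed
  have "gram h m $ a $ b = diag_mat (arm_count h m) $ a $ b" for a b
  proof -
    have "gram h m $ a $ b = (\<Sum>j<m. fst (h j) $ a * fst (h j) $ b)"
      by (simp add: gram_def)
    also have "\<dots> = (\<Sum>j<m. if a = b then (fst (h j) $ a)\<^sup>2 else 0)"
      by (intro sum.cong refl entry) simp
    finally show ?thesis
      by (simp add: diag_mat_def arm_count_def)
  qed
  then show ?thesis
    by (simp add: vec_eq_iff)
qed

lemma lambda_min_gram_le_arm_count:
  "basis_design h m \<Longrightarrow> lambda_min (gram h m) \<le> arm_count h m i"
  by (simp add: gram_basis_design lambda_min_diag_mat_le)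

lemma ols_basis_design:
  assumes "basis_design h m" and "\<And>i. arm_count h m i > 0"
  shows "ols h m = (\<chi> i. xty h m $ i / arm_count h m i)"
  using assms
  by (simp add: ols_def gram_basis_design matrix_inv_diag_mat less_imp_neq[symmetric]
      diag_mat_mult_vec vec_eq_iff)

lemma mvn_ols_basis_design:
  assumes "basis_design h m" and N: "\<And>i. arm_count h m i > 0" and sd: "sd > 0"
  shows "mvn (ols h m) (sd\<^sup>2 *\<^sub>R matrix_inv (gram h m))
           = density lborel (diag_normal_density (ols h m) (\<lambda>i. sd / sqrt (arm_count h m i)))"
proof -
  have "sd\<^sup>2 *\<^sub>R matrix_inv (gram h m) = diag_mat (\<lambda>i. (sd / sqrt (arm_count h m i))\<^sup>2)"
    using assms
    by (simp add: gram_basis_design matrix_inv_diag_mat less_imp_neq[symmetric] scaleR_diag_mat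
        power_divide less_imp_le)
  then show ?thesis
    using sd N by (simp add: mvn_diag_mat)
qed

lemma sum_sq_residuals_basis_design:
  fixes h :: "nat \<Rightarrow> (real^'p::finite) \<times> real"
  assumes design: "basis_design h m" and N: "\<And>i. arm_count h m i > 0"
  shows "(\<Sum>j<m. (snd (h j) - fst (h j) \<bullet> b)\<^sup>2)
    = (\<Sum>j<m. (snd (h j))\<^sup>2) - (\<Sum>i\<in>UNIV. (xty h m $ i)\<^sup>2 / arm_count h m i)
      + (\<Sum>i\<in>UNIV. arm_count h m i * (b$i - ols h m $ i)\<^sup>2)"
proof -
  have per_obs: "(y - x \<bullet> b)\<^sup>2 = y\<^sup>2 + (\<Sum>i\<in>UNIV. (x$i)\<^sup>2 * (b$i)\<^sup>2 - 2 * b$i * (y * x$i))"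
    if x: "x \<in> range (\<lambda>i. axis i (1::real))" for x :: "real^'p" and y
  proof -
    obtain k where k: "x = axis k 1"
      using x by auto
    have "(\<Sum>i\<in>UNIV. (x$i)\<^sup>2 * (b$i)\<^sup>2 - 2 * b$i * (y * x$i))
        = (\<Sum>i\<in>UNIV. if i = k then (b$k)\<^sup>2 - 2 * b$k * y else 0)"
      unfolding k by (intro sum.cong) (auto simp: axis_def)
    then have "(\<Sum>i\<in>UNIV. (x$i)\<^sup>2 * (b$i)\<^sup>2 - 2 * b$i * (y * x$i)) = (b$k)\<^sup>2 - 2 * b$k * y"
      by simp
    then show ?thesis
      unfolding k by (simp add: inner_axis' power2_eq_square algebra_simps)
  qed
  have "(\<Sum>j<m. (snd (h j) - fst (h j) \<bullet> b)\<^sup>2)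
      = (\<Sum>j<m. (snd (h j))\<^sup>2) + (\<Sum>i\<in>UNIV. arm_count h m i * (b$i)\<^sup>2 - 2 * b$i * xty h m $ i)"
    using design
    by (simp add: basis_design_def per_obs sum.distrib sum_subtractf sum.swap[of _ UNIV]
        arm_count_def xty_def sum_distrib_left sum_distrib_right mult.assoc)
  also have "(\<Sum>i\<in>UNIV. arm_count h m i * (b$i)\<^sup>2 - 2 * b$i * xty h m $ i)
      = (\<Sum>i\<in>UNIV. arm_count h m i * (b$i - ols h m $ i)\<^sup>2 - (xty h m $ i)\<^sup>2 / arm_count h m i)"
    using N[THEN less_imp_neq[symmetric]]
    by (intro sum.cong refl) (simp add: ols_basis_design[OF design N] power2_eq_square field_simps)
  finally show ?thesis
    by (simp add: sum_subtractf)
qed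

lemma lik_basis_design:
  fixes h :: "nat \<Rightarrow> (real^'p::finite) \<times> real"
  assumes design: "basis_design h m" and N: "\<And>i. arm_count h m i > 0" and sd: "sd > 0"
  obtains K where "K > 0"
    "lik sd h m = (\<lambda>b. K * diag_normal_density (ols h m) (\<lambda>i. sd / sqrt (arm_count h m i)) b)"
proof
  let ?s = "\<lambda>i. sd / sqrt (arm_count h m i)"
  let ?R = "(\<Sum>j<m. (snd (h j))\<^sup>2) - (\<Sum>i\<in>UNIV. (xty h m $ i)\<^sup>2 / arm_count h m i)"
  define P where "P = (\<Prod>i\<in>UNIV. 1 / sqrt (2 * pi * (?s i)\<^sup>2))"
  have P: "P > 0"
    unfolding P_def using N sd by (intro prod_pos) (simp add: less_imp_neq[symmetric])
  show "exp (- ?R / (2 * sd\<^sup>2)) / P > 0"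
    using P by simp
  have "lik sd h m b = exp (- ?R / (2 * sd\<^sup>2)) / P * diag_normal_density (ols h m) ?s b" for b
  proof -
    let ?Q = "\<Sum>i\<in>UNIV. arm_count h m i * (b$i - ols h m $ i)\<^sup>2"
    have "lik sd h m b = exp (- (\<Sum>j<m. (snd (h j) - fst (h j) \<bullet> b)\<^sup>2) / (2 * sd\<^sup>2))"
      by (simp add: lik_def exp_sum[symmetric] sum_divide_distrib[symmetric] sum_negf)
    also have "\<dots> = exp (- ?R / (2 * sd\<^sup>2)) * exp (- ?Q / (2 * sd\<^sup>2))"
      unfolding sum_sq_residuals_basis_design[OF design N] exp_add[symmetric]
      by (simp add: add_divide_distrib diff_divide_distrib)
    also have "- ?Q / (2 * sd\<^sup>2) = (\<Sum>i\<in>UNIV. - (b$i - ols h m $ i)\<^sup>2 / (2 * (?s i)\<^sup>2))"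
      unfolding sum_divide_distrib sum_negf[symmetric] minus_divide_left
      using N sd by (intro arg_cong[where f=uminus] sum.cong refl)
        (simp add: less_imp_le field_simps)
    also have "exp \<dots> = (\<Prod>i\<in>UNIV. exp (- (b$i - ols h m $ i)\<^sup>2 / (2 * (?s i)\<^sup>2)))"
      by (simp add: exp_sum)
    also have "exp (- ?R / (2 * sd\<^sup>2)) * \<dots>
        = exp (- ?R / (2 * sd\<^sup>2)) / P * diag_normal_density (ols h m) ?s b"
      using P N sd unfolding diag_normal_density_def normal_density_def prod.distrib P_def
      by (simp add: less_imp_neq[symmetric])
    finally show ?thesis .
  qed
  then show "lik sd h m = (\<lambda>b. exp (- ?R / (2 * sd\<^sup>2)) / P * diag_normal_density (ols h m) ?s b)"
    by auto
qed

lemma posterior_eq_normalised: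
  assumes "K > 0" and "lik sd h m = (\<lambda>b. K * \<phi> b)"
  shows "posterior prior sd h m
           = density lborel (\<lambda>b. prior b * \<phi> b / (\<integral>c. prior c * \<phi> c \<partial>lborel))"
  using assms by (simp add: posterior_def mult.left_commute)

lemma dist_vec_le_card_mult:
  fixes x y :: "real^'n::finite" and \<epsilon> :: real
  assumes "\<And>i. \<bar>x $ i - y $ i\<bar> \<le> \<epsilon>"
  shows "dist x y \<le> CARD('n) * \<epsilon>"
proof -
  have "dist x y \<le> (\<Sum>i\<in>UNIV. \<bar>(x - y) $ i\<bar>)"
    unfolding dist_norm by (rule norm_le_l1_cart)
  also have "\<dots> \<le> (\<Sum>i\<in>(UNIV::'n set). \<epsilon>)"
    using assms by (intro sum_mono) simp
  finally show ?thesis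
    by simp
qed

lemma divide_sqrt_bounds:
  fixes a \<delta> N :: real
  assumes a: "0 < a" and \<delta>: "0 < \<delta>" and N: "(a / \<delta>)\<^sup>2 \<le> N"
  shows "0 < a / sqrt N" and "a / sqrt N \<le> \<delta>"
proof -
  have "0 < (a / \<delta>)\<^sup>2"
    using a \<delta> by simp
  then have "0 < N"
    using N by linarith
  have "a / \<delta> \<le> sqrt N"
    using N by (rule real_le_rsqrt)
  with \<open>0 < N\<close> show "0 < a / sqrt N" and "a / sqrt N \<le> \<delta>"
    using a \<delta> by (simp_all add: field_simps)
qed

lemma abs_tv_posterior_mvn_le_L1:
  fixes prior :: "real^'p::finite \<Rightarrow> real" and h :: "nat \<Rightarrow> (real^'p) \<times> real"
  assumes design: "basis_design h m" and N: "\<And>i. arm_count h m i > 0" and sd: "sd > 0"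
    and prior: "prior \<in> borel_measurable borel" "\<And>b. 0 \<le> prior b" "\<And>b. prior b \<le> B"
  defines "\<phi> \<equiv> diag_normal_density (ols h m) (\<lambda>i. sd / sqrt (arm_count h m i))"
  shows "\<bar>tv_dist (posterior prior sd h m) (mvn (ols h m) (sd\<^sup>2 *\<^sub>R matrix_inv (gram h m)))\<bar>
           \<le> (\<integral>b. \<bar>prior b * \<phi> b / (\<integral>c. prior c * \<phi> c \<partial>lborel) - \<phi> b\<bar> \<partial>lborel)"
proof -
  have s: "0 < sd / sqrt (arm_count h m i)" for i
    using sd N[of i] by simp
  obtain L where "L > 0" "lik sd h m = (\<lambda>b. L * \<phi> b)"
    using lik_basis_design[OF design N sd] unfolding \<phi>_def by blast
  then have posterior: "posterior prior sd h m
      = density lborel (\<lambda>b. prior b * \<phi> b / (\<integral>c. prior c * \<phi> c \<partial>lborel))"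
    by (rule posterior_eq_normalised)
  have \<phi>: "integrable lborel \<phi>" "\<And>b. 0 \<le> \<phi> b"
    unfolding \<phi>_def using s by (auto intro: integrable_diag_normal_density diag_normal_density_nonneg)
  have "integrable lborel (\<lambda>b. prior b * \<phi> b)"
    unfolding \<phi>_def using prior s by (intro integrable_bounded_mult_diag_normal_density[where M=B]) auto
  moreover have "0 \<le> (\<integral>c. prior c * \<phi> c \<partial>lborel)"
    using prior(2) \<phi>(2) by (simp add: integral_nonneg_AE)
  ultimately show ?thesis
    unfolding posterior mvn_ols_basis_design[OF design N sd] \<phi>_def[symmetric]
    using prior(2) \<phi> by (intro abs_tv_dist_density_le_L1) auto
qed

lemma abs_tv_posterior_mvn_le:
  fixes prior :: "real^'p::finite \<Rightarrow> real"
  assumes nonneg: "\<And>b. prior b \<ge> 0" and cont: "continuous_on UNIV prior"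
    and bounded: "\<And>b. prior b \<le> B" and pos: "prior beta0 > 0" and sd: "sd > 0" and e: "e > 0"
  obtains K \<epsilon> where "K > 0" "\<epsilon> > 0"
    "\<And>h m. basis_design h m \<Longrightarrow> (\<And>i. K \<le> arm_count h m i)
       \<Longrightarrow> (\<And>i. \<bar>xty h m $ i / arm_count h m i - beta0 $ i\<bar> \<le> \<epsilon>)
       \<Longrightarrow> \<bar>tv_dist (posterior prior sd h m) (mvn (ols h m) (sd\<^sup>2 *\<^sub>R matrix_inv (gram h m)))\<bar> \<le> e"
proof -
  obtain \<delta> \<epsilon> where \<delta>: "\<delta> > 0" and \<epsilon>: "\<epsilon> > 0" and L1_small:
    "\<And>c s. (\<And>i. 0 < s i) \<Longrightarrow> (\<And>i. s i \<le> \<delta>) \<Longrightarrow> dist c beta0 \<le> \<epsilon> \<Longrightarrow>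
       (\<integral>b. \<bar>prior b * diag_normal_density c s b / (\<integral>b. prior b * diag_normal_density c s b \<partial>lborel)
              - diag_normal_density c s b\<bar> \<partial>lborel) \<le> e"
    using L1_normalised_prior_mult_diag_normal_le[OF nonneg cont bounded pos e] by blast
  have K: "(sd / \<delta>)\<^sup>2 > 0"
    using sd \<delta> by simp
  show ?thesis
  proof (rule that[OF K, of "\<epsilon> / CARD('p)"])
    show "\<epsilon> / CARD('p) > 0"
      using \<epsilon> by simp
    fix h :: "nat \<Rightarrow> (real^'p) \<times> real" and m
    assume design: "basis_design h m" and N: "\<And>i. (sd / \<delta>)\<^sup>2 \<le> arm_count h m i"
      and close: "\<And>i. \<bar>xty h m $ i / arm_count h m i - beta0 $ i\<bar> \<le> \<epsilon> / CARD('p)"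
    define s where "s i = sd / sqrt (arm_count h m i)" for i
    have N_pos: "arm_count h m i > 0" for i
      using N[of i] K by linarith
    have s: "0 < s i" "s i \<le> \<delta>" for i
      unfolding s_def using divide_sqrt_bounds[OF sd \<delta> N] by auto
    have ols: "ols h m = (\<chi> i. xty h m $ i / arm_count h m i)"
      by (rule ols_basis_design[OF design N_pos])
    have "dist (ols h m) beta0 \<le> CARD('p) * (\<epsilon> / CARD('p))"
      using close by (intro dist_vec_le_card_mult) (simp add: ols)
    then have "dist (ols h m) beta0 \<le> \<epsilon>"
      by simp
    then have "(\<integral>b. \<bar>prior b * diag_normal_density (ols h m) s b
        / (\<integral>b. prior b * diag_normal_density (ols h m) s b \<partial>lborel)
        - diag_normal_density (ols h m) s b\<bar> \<partial>lborel) \<le> e"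
      using L1_small[of s] s by blast
    then show "\<bar>tv_dist (posterior prior sd h m) (mvn (ols h m) (sd\<^sup>2 *\<^sub>R matrix_inv (gram h m)))\<bar> \<le> e"
      using abs_tv_posterior_mvn_le_L1[OF design N_pos sd borel_measurable_continuous_onI[OF cont]
          nonneg bounded]
      unfolding s_def by linarith
  qed
qed

section \<open>Consistency of the arm means\<close>

text \<open>The log-likelihood ratio of one observation (x, y) under beta0 + a sd^2 e_i against beta0.\<close>

definition tilt_score :: "real \<Rightarrow> real^'p::finite \<Rightarrow> real \<Rightarrow> 'p \<Rightarrow> real^'p \<Rightarrow> real \<Rightarrow> real" where
  "tilt_score sd beta0 a i x y = a * x$i * (y - x \<bullet> beta0) - a\<^sup>2 * sd\<^sup>2 * (x$i)\<^sup>2 / 2"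

lemma tilt_score_measurable:
  "(\<lambda>z. tilt_score sd beta0 a i (fst z) (snd z)) \<in> borel_measurable (borel \<Otimes>\<^sub>M borel)"
  unfolding borel_prod tilt_score_def
  by (intro borel_measurable_continuous_onI continuous_intros) auto

lemma nn_integral_exp_tilt_score:
  assumes "sd > 0"
  shows "(\<integral>\<^sup>+ y. ennreal (exp (tilt_score sd beta0 a i x y)) \<partial>obs_law beta0 sd x) = 1"
  using nn_integral_obs_law_exp_tilt[OF assms, where a="a * x$i" and x=x and beta=beta0]
  by (simp add: tilt_score_def power_mult_distrib mult_ac)

lemma sum_tilt_score_basis_design:
  assumes "basis_design h k"
  shows "(\<Sum>j<k. tilt_score sd beta0 a i (fst (h j)) (snd (h j)))
           = a * (xty h k $ i - beta0 $ i * arm_count h k i) - a\<^sup>2 * sd\<^sup>2 * arm_count h k i / 2"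
proof -
  have per_obs: "tilt_score sd beta0 a i x y
      = a * (y * x$i - beta0$i * (x$i)\<^sup>2) - a\<^sup>2 * sd\<^sup>2 * (x$i)\<^sup>2 / 2"
    if x: "x \<in> range (\<lambda>i. axis i (1::real))" for x y
  proof -
    obtain k where k: "x = axis k 1"
      using x by auto
    have "x \<bullet> beta0 = beta0$k"
      unfolding k by (simp add: inner_axis')
    moreover have "x$i = (if i = k then 1 else 0)"
      unfolding k by (simp add: axis_def)
    ultimately have "x$i * (x \<bullet> beta0) = beta0$i * (x$i)\<^sup>2"
      by simp
    then show ?thesis
      unfolding tilt_score_def by (simp add: algebra_simps)
  qed
  show ?thesis
    using assms
    by (simp add: basis_design_def per_obs xty_def arm_count_def sum_subtractf sum_distrib_left
        sum_divide_distrib right_diff_distrib mult.assoc)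
qed

lemma tilt_score_sum_ge_if_arm_mean_far:
  assumes design: "basis_design h k" and sd: "sd > 0" and K: "K > 0" and \<epsilon>: "\<epsilon> > 0"
    and N: "K \<le> arm_count h k i" and far: "\<epsilon> < \<bar>xty h k $ i / arm_count h k i - beta0 $ i\<bar>"
  shows "\<exists>sg\<in>{1, - 1}. \<epsilon>\<^sup>2 * K / (2 * sd\<^sup>2)
           \<le> (\<Sum>j<k. tilt_score sd beta0 (sg * \<epsilon> / sd\<^sup>2) i (fst (h j)) (snd (h j)))"
proof -
  let ?N = "arm_count h k i" and ?S = "xty h k $ i"
  have N_pos: "?N > 0"
    using N K by linarith
  \<comment> \<open>tilt towards the side on which the arm mean deviates\<close>
  obtain sg where sg: "sg \<in> {1, - 1}" and dev: "\<epsilon> * ?N < sg * (?S - beta0 $ i * ?N)"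
  proof (cases "?S / ?N - beta0 $ i > \<epsilon>")
    case True
    then show ?thesis
      using that[of 1] N_pos by (simp add: field_simps)
  next
    case False
    then have "beta0 $ i - ?S / ?N > \<epsilon>"
      using far by linarith
    then show ?thesis
      using that[of "- 1"] N_pos by (simp add: field_simps)
  qed
  have "\<epsilon>\<^sup>2 * K / (2 * sd\<^sup>2) \<le> \<epsilon>\<^sup>2 * ?N / (2 * sd\<^sup>2)"
    using N sd by (intro divide_right_mono mult_left_mono) auto
  also have "\<dots> = \<epsilon> / sd\<^sup>2 * (\<epsilon> * ?N) - \<epsilon>\<^sup>2 / (2 * sd\<^sup>2) * ?N"
    using sd by (simp add: field_simps power2_eq_square)
  also have "\<dots> \<le> \<epsilon> / sd\<^sup>2 * (sg * (?S - beta0 $ i * ?N)) - \<epsilon>\<^sup>2 / (2 * sd\<^sup>2) * ?N"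
    using dev \<epsilon> sd by (intro diff_right_mono mult_left_mono) auto
  also have "\<dots> = (\<Sum>j<k. tilt_score sd beta0 (sg * \<epsilon> / sd\<^sup>2) i (fst (h j)) (snd (h j)))"
    using sg sd by (auto simp: sum_tilt_score_basis_design[OF design] field_simps)
  finally show ?thesis
    using sg by blast
qed

lemma arm_mean_deviation_event:
  fixes Lam :: "nat \<Rightarrow> (nat \<Rightarrow> (real^'p::finite) \<times> real) \<Rightarrow> (real^'p) measure"
    and beta0 :: "real^'p" and k :: nat and i :: 'p
  assumes Lam: "\<And>j. Lam j \<in> hist_space j \<rightarrow>\<^sub>M prob_algebra borel" and sd: "sd > 0"
    and K: "K > 0" and \<epsilon>: "\<epsilon> > 0"
  defines "E \<equiv> {h \<in> space (traj Lam beta0 sd k). \<exists>sg\<in>{1, - 1}.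
    \<epsilon>\<^sup>2 * K / (2 * sd\<^sup>2) \<le> (\<Sum>j<k. tilt_score sd beta0 (sg * \<epsilon> / sd\<^sup>2) i (fst (h j)) (snd (h j)))}"
  shows "E \<in> sets (traj Lam beta0 sd k)"
    and "measure (traj Lam beta0 sd k) E \<le> 2 * exp (- (\<epsilon>\<^sup>2 * K / (2 * sd\<^sup>2)))"
    and "\<And>h. h \<in> space (traj Lam beta0 sd k) \<Longrightarrow> basis_design h k \<Longrightarrow> K \<le> arm_count h k i
       \<Longrightarrow> \<epsilon> < \<bar>xty h k $ i / arm_count h k i - beta0 $ i\<bar> \<Longrightarrow> h \<in> E"
proof -
  let ?P = "traj Lam beta0 sd k"
  let ?t = "\<epsilon>\<^sup>2 * K / (2 * sd\<^sup>2)"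
  define E' where "E' sg = {h \<in> space ?P. ?t \<le> (\<Sum>j<k. tilt_score sd beta0 (sg * \<epsilon> / sd\<^sup>2) i (fst (h j)) (snd (h j)))}"
    for sg :: real
  have E_eq: "E = E' 1 \<union> E' (- 1)"
    unfolding E_def E'_def by auto
  note chernoff = measure_traj_sum_ge_le[OF Lam sd tilt_score_measurable
      eq_refl[OF nn_integral_exp_tilt_score[OF sd]]]
  have E': "E' sg \<in> sets ?P" "measure ?P (E' sg) \<le> exp (- ?t)" for sg
    unfolding E'_def by (rule chernoff(1), rule chernoff(2))
  then show "E \<in> sets ?P"
    unfolding E_eq by auto
  interpret P: prob_space ?P
    by (rule prob_space_traj[OF Lam sd])
  have "measure ?P E \<le> measure ?P (E' 1) + measure ?P (E' (- 1))"
    unfolding E_eq using E'(1) by (intro measure_subadditive) auto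
  then show "measure ?P E \<le> 2 * exp (- ?t)"
    using E'(2)[of 1] E'(2)[of "- 1"] by linarith
  fix h assume "h \<in> space ?P" "basis_design h k" "K \<le> arm_count h k i"
    "\<epsilon> < \<bar>xty h k $ i / arm_count h k i - beta0 $ i\<bar>"
  then show "h \<in> E"
    using tilt_score_sum_ge_if_arm_mean_far[OF _ sd K \<epsilon>] unfolding E_def by blast
qed

lemma arm_means_close_outside_small_event:
  fixes Lam :: "nat \<Rightarrow> (nat \<Rightarrow> (real^'p::finite) \<times> real) \<Rightarrow> (real^'p) measure"
  assumes Lam: "\<And>j. Lam j \<in> hist_space j \<rightarrow>\<^sub>M prob_algebra borel" and sd: "sd > 0"
    and design: "AE h in traj Lam beta0 sd k. basis_design h k"
    and K: "K > 0" and \<epsilon>: "\<epsilon> > 0"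
  defines "P \<equiv> traj Lam beta0 sd k"
  obtains U where "U \<in> sets P" "measure P U \<le> CARD('p) * (2 * exp (- (\<epsilon>\<^sup>2 * K / (2 * sd\<^sup>2))))"
    "\<And>h. h \<in> space P \<Longrightarrow> h \<notin> U \<Longrightarrow> basis_design h k"
    "\<And>h i. h \<in> space P \<Longrightarrow> h \<notin> U \<Longrightarrow> (\<And>i. K \<le> arm_count h k i)
       \<Longrightarrow> \<bar>xty h k $ i / arm_count h k i - beta0 $ i\<bar> \<le> \<epsilon>"
proof -
  interpret prob_space P
    unfolding P_def by (rule prob_space_traj[OF Lam sd])
  obtain Null where Null: "{h \<in> space P. \<not> basis_design h k} \<subseteq> Null" "Null \<in> sets P"
    "emeasure P Null = 0"
    using design unfolding P_def by (auto elim!: AE_E)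
  define E where "E i = {h \<in> space P. \<exists>sg\<in>{1, - 1}. \<epsilon>\<^sup>2 * K / (2 * sd\<^sup>2)
    \<le> (\<Sum>j<k. tilt_score sd beta0 (sg * \<epsilon> / sd\<^sup>2) i (fst (h j)) (snd (h j)))}" for i
  have E: "E i \<in> sets P" "measure P (E i) \<le> 2 * exp (- (\<epsilon>\<^sup>2 * K / (2 * sd\<^sup>2)))"
    "\<And>h. h \<in> space P \<Longrightarrow> basis_design h k \<Longrightarrow> K \<le> arm_count h k i
       \<Longrightarrow> \<epsilon> < \<bar>xty h k $ i / arm_count h k i - beta0 $ i\<bar> \<Longrightarrow> h \<in> E i" for i
    unfolding E_def P_def
    by (rule arm_mean_deviation_event(1)[OF Lam sd K \<epsilon>], rule arm_mean_deviation_event(2)[OF Lam sd K \<epsilon>],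
        rule arm_mean_deviation_event(3)[OF Lam sd K \<epsilon>])
  show ?thesis
  proof (rule that[of "Null \<union> (\<Union>i. E i)"])
    show "Null \<union> (\<Union>i. E i) \<in> sets P"
      using Null(2) E(1) by auto
    have "measure P (Null \<union> (\<Union>i. E i)) \<le> measure P Null + measure P (\<Union>i. E i)"
      using Null(2) E(1) by (intro measure_subadditive) auto
    also have "measure P Null = 0"
      using Null(3) by (simp add: emeasure_eq_measure)
    also have "measure P (\<Union>i. E i) \<le> (\<Sum>i\<in>UNIV. measure P (E i))"
      using E(1) by (intro finite_measure_subadditive_finite) auto
    also have "\<dots> \<le> (\<Sum>i\<in>(UNIV::'p set). 2 * exp (- (\<epsilon>\<^sup>2 * K / (2 * sd\<^sup>2))))"
      by (intro sum_mono E(2))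
    finally show "measure P (Null \<union> (\<Union>i. E i)) \<le> CARD('p) * (2 * exp (- (\<epsilon>\<^sup>2 * K / (2 * sd\<^sup>2))))"
      by simp
    show design: "basis_design h k" if "h \<in> space P" "h \<notin> Null \<union> (\<Union>i. E i)" for h
      using that Null(1) by auto
    show "\<bar>xty h k $ i / arm_count h k i - beta0 $ i\<bar> \<le> \<epsilon>"
      if "h \<in> space P" "h \<notin> Null \<union> (\<Union>i. E i)" "\<And>i. K \<le> arm_count h k i" for h i
      using that(2) E(3)[OF that(1) design[OF that(1,2)] that(3)[of i]] by (meson UnCI UNIV_I UN_I not_le)
  qed
qed

lemma outer_prob_nonneg: "outer_prob M S \<ge> 0"
  unfolding outer_prob_def by (rule cInf_greatest) auto

lemma outer_prob_le_measure:
  assumes "A \<in> sets M" "S \<inter> space M \<subseteq> A"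
  shows "outer_prob M S \<le> measure M A"
  unfolding outer_prob_def using assms by (intro cInf_lower bdd_belowI[of _ 0]) auto

lemma outer_prob_le_add_measure:
  assumes "finite_measure M" and U: "U \<in> sets M" and S: "S \<inter> space M \<subseteq> T \<union> U"
  shows "outer_prob M S \<le> outer_prob M T + measure M U"
proof -
  interpret finite_measure M
    by fact
  have "outer_prob M S - measure M U \<le> outer_prob M T"
    unfolding outer_prob_def[of M T]
  proof (rule cInf_greatest)
    fix x assume "x \<in> {measure M A |A. A \<in> sets M \<and> T \<inter> space M \<subseteq> A}"
    then obtain A where A: "A \<in> sets M" "T \<inter> space M \<subseteq> A" and x: "x = measure M A"
      by auto
    have "outer_prob M S \<le> measure M (A \<union> U)"
      using A U S sets.sets_into_space[OF U] by (intro outer_prob_le_measure) auto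
    also have "\<dots> \<le> measure M A + measure M U"
      using A U by (intro measure_subadditive) auto
    finally show "outer_prob M S - measure M U \<le> x"
      using x by simp
  qed auto
  then show ?thesis
    by simp
qed

lemma LIMSEQ_zero_if_approx_bounded:
  fixes a :: "nat \<Rightarrow> real"
  assumes "\<And>n. 0 \<le> a n" and "\<And>\<eta>. \<eta> > 0 \<Longrightarrow> \<exists>b. b \<longlonglongrightarrow> 0 \<and> (\<forall>n. a n \<le> b n + \<eta>)"
  shows "a \<longlonglongrightarrow> 0"
proof (rule LIMSEQ_I)
  fix r :: real assume r: "r > 0"
  obtain b where b: "b \<longlonglongrightarrow> 0" and le: "\<And>n. a n \<le> b n + r / 2"
    using assms(2)[of "r / 2"] r by auto
  obtain n0 where n0: "\<And>n. n \<ge> n0 \<Longrightarrow> norm (b n - 0) < r / 2"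
    using LIMSEQ_D[OF b, of "r / 2"] r by auto
  show "\<exists>n0. \<forall>n\<ge>n0. norm (a n - 0) < r"
  proof (intro exI allI impI)
    fix n assume "n \<ge> n0"
    then have "b n < r / 2"
      using n0[of n] by simp
    then show "norm (a n - 0) < r"
      using assms(1)[of n] le[of n] by simp
  qed
qed

lemma tends_to_zero_in_prob_if_dominated:
  assumes dominated: "\<And>e \<eta>. e > 0 \<Longrightarrow> \<eta> > 0 \<Longrightarrow> \<exists>K. \<forall>n.
      outer_prob (P n) {h \<in> space (P n). e < \<bar>Z n h\<bar>} \<le> outer_prob (P n) {h \<in> space (P n). W n h \<le> K} + \<eta>"
    and W: "tends_to_infinity_in_prob P W"
  shows "tends_to_zero_in_prob P Z"
  unfolding tends_to_zero_in_prob_def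
proof (intro allI impI LIMSEQ_zero_if_approx_bounded[OF outer_prob_nonneg])
  fix e \<eta> :: real assume "e > 0" "\<eta> > 0"
  then obtain K where "\<And>n. outer_prob (P n) {h \<in> space (P n). e < \<bar>Z n h\<bar>}
      \<le> outer_prob (P n) {h \<in> space (P n). W n h \<le> K} + \<eta>"
    using dominated by blast
  moreover have "(\<lambda>n. outer_prob (P n) {h \<in> space (P n). W n h \<le> K}) \<longlonglongrightarrow> 0"
    using W unfolding tends_to_infinity_in_prob_def by blast
  ultimately show "\<exists>b. b \<longlonglongrightarrow> 0 \<and> (\<forall>n. outer_prob (P n) {h \<in> space (P n). e < \<bar>Z n h\<bar>} \<le> b n + \<eta>)"
    by blast
qed

lemma outer_prob_abs_tv_gt_le:
  fixes Lam :: "nat \<Rightarrow> (nat \<Rightarrow> (real^'p::finite) \<times> real) \<Rightarrow> (real^'p) measure"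
  assumes Lam: "\<And>j. Lam j \<in> hist_space j \<rightarrow>\<^sub>M prob_algebra borel" and sd: "sd > 0"
    and design: "AE h in traj Lam beta0 sd k. basis_design h k"
    and K: "K > 0" and \<epsilon>: "\<epsilon> > 0"
    and tv_small: "\<And>h. basis_design h k \<Longrightarrow> (\<And>i. K \<le> arm_count h k i)
       \<Longrightarrow> (\<And>i. \<bar>xty h k $ i / arm_count h k i - beta0 $ i\<bar> \<le> \<epsilon>)
       \<Longrightarrow> \<bar>tv_dist (posterior prior sd h k) (mvn (ols h k) (sd\<^sup>2 *\<^sub>R matrix_inv (gram h k)))\<bar> \<le> e"
  defines "P \<equiv> traj Lam beta0 sd k"
  shows "outer_prob P {h \<in> space P. e < \<bar>tv_dist (posterior prior sd h k)
             (mvn (ols h k) (sd\<^sup>2 *\<^sub>R matrix_inv (gram h k)))\<bar>}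
         \<le> outer_prob P {h \<in> space P. lambda_min (gram h k) \<le> K}
           + CARD('p) * (2 * exp (- (\<epsilon>\<^sup>2 * K / (2 * sd\<^sup>2))))"
proof -
  obtain U where U: "U \<in> sets P" "measure P U \<le> CARD('p) * (2 * exp (- (\<epsilon>\<^sup>2 * K / (2 * sd\<^sup>2))))"
    and outside_U: "\<And>h. h \<in> space P \<Longrightarrow> h \<notin> U \<Longrightarrow> basis_design h k"
      "\<And>h i. h \<in> space P \<Longrightarrow> h \<notin> U \<Longrightarrow> (\<And>i. K \<le> arm_count h k i)
         \<Longrightarrow> \<bar>xty h k $ i / arm_count h k i - beta0 $ i\<bar> \<le> \<epsilon>"
    using arm_means_close_outside_small_event[OF Lam sd design K \<epsilon>] unfolding P_def by metis
  have "h \<in> U"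
    if h: "h \<in> space P" and not_small: "\<not> lambda_min (gram h k) \<le> K"
      and big: "e < \<bar>tv_dist (posterior prior sd h k) (mvn (ols h k) (sd\<^sup>2 *\<^sub>R matrix_inv (gram h k)))\<bar>"
    for h
  proof (rule ccontr)
    assume "h \<notin> U"
    with h have design: "basis_design h k"
      by (rule outside_U(1))
    have N: "K \<le> arm_count h k i" for i
      using not_small lambda_min_gram_le_arm_count[OF design, of i] by linarith
    have "\<bar>tv_dist (posterior prior sd h k) (mvn (ols h k) (sd\<^sup>2 *\<^sub>R matrix_inv (gram h k)))\<bar> \<le> e"
      using outside_U(2)[OF h \<open>h \<notin> U\<close> N] by (rule tv_small[OF design N])
    with big show False
      by linarith
  qed
  then have "{h \<in> space P. e < \<bar>tv_dist (posterior prior sd h k) (mvn (ols h k) (sd\<^sup>2 *\<^sub>R matrix_inv (gram h k)))\<bar>}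
      \<inter> space P \<subseteq> {h \<in> space P. lambda_min (gram h k) \<le> K} \<union> U"
    by auto
  moreover have "finite_measure P"
    unfolding P_def using prob_space_traj[OF Lam sd] by (rule prob_space.finite_measure)
  ultimately have "outer_prob P {h \<in> space P. e < \<bar>tv_dist (posterior prior sd h k)
      (mvn (ols h k) (sd\<^sup>2 *\<^sub>R matrix_inv (gram h k)))\<bar>}
    \<le> outer_prob P {h \<in> space P. lambda_min (gram h k) \<le> K} + measure P U"
    using outer_prob_le_add_measure[OF _ U(1)] by blast
  with U(2) show ?thesis
    by linarith
qed

theorem theorem2:
  fixes Lam :: "nat \<Rightarrow> nat \<Rightarrow> (nat \<Rightarrow> (real^'p::finite) \<times> real) \<Rightarrow> (real^'p) measure"
    and m :: "nat \<Rightarrow> nat"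
    and beta0 :: "real^'p"
    and sd :: real
    and prior :: "real^'p \<Rightarrow> real"
  assumes sigma_pos: "sd > 0"
    and Lam_kernel: "\<And>n j. Lam n j \<in> measurable (hist_space j) (prob_algebra borel)"
    and basis_design: "\<And>n. AE h in traj (Lam n) beta0 sd (m n).
                          \<forall>j < m n. fst (h j) \<in> range (\<lambda>i. axis i 1)"
    and lambda_min_diverges:
          "tends_to_infinity_in_prob (\<lambda>n. traj (Lam n) beta0 sd (m n))
             (\<lambda>n h. lambda_min (gram h (m n)))"
    and prior_nonneg: "\<And>b. prior b \<ge> 0"
    and prior_density: "(\<integral>\<^sup>+ b. ennreal (prior b) \<partial>lborel) = 1"
    and prior_cont: "continuous_on UNIV prior"
    and prior_bounded: "\<exists>B. \<forall>b. prior b \<le> B"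
    and prior_pos: "prior beta0 > 0"
  shows "tends_to_zero_in_prob (\<lambda>n. traj (Lam n) beta0 sd (m n))
           (\<lambda>n h. tv_dist (posterior prior sd h (m n))
                    (mvn (ols h (m n)) (sd\<^sup>2 *\<^sub>R matrix_inv (gram h (m n)))))"
proof (rule tends_to_zero_in_prob_if_dominated[OF _ lambda_min_diverges])
  fix e \<eta> :: real assume e: "e > 0" and "\<eta> > 0"
  obtain B where B: "\<And>b. prior b \<le> B"
    using prior_bounded by blast
  obtain K0 \<epsilon> where "K0 > 0" and \<epsilon>: "\<epsilon> > 0" and tv_small:
    "\<And>h m. basis_design h m \<Longrightarrow> (\<And>i. K0 \<le> arm_count h m i)
       \<Longrightarrow> (\<And>i. \<bar>xty h m $ i / arm_count h m i - beta0 $ i\<bar> \<le> \<epsilon>)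
       \<Longrightarrow> \<bar>tv_dist (posterior prior sd h m) (mvn (ols h m) (sd\<^sup>2 *\<^sub>R matrix_inv (gram h m)))\<bar> \<le> e"
    using abs_tv_posterior_mvn_le[OF prior_nonneg prior_cont B prior_pos sigma_pos e] by blast
  have "\<epsilon>\<^sup>2 / (2 * sd\<^sup>2) > 0"
    using \<epsilon> sigma_pos by simp
  then obtain K where "K0 \<le> K" and K: "K > 0"
    and tail: "2 * CARD('p) * exp (- (\<epsilon>\<^sup>2 / (2 * sd\<^sup>2) * K)) \<le> \<eta>"
    using exp_tail_le[OF _ \<open>\<eta> > 0\<close>] by blast
  have "CARD('p) * (2 * exp (- (\<epsilon>\<^sup>2 * K / (2 * sd\<^sup>2)))) \<le> \<eta>"
    using tail by (simp add: mult_ac)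
  with outer_prob_abs_tv_gt_le[OF Lam_kernel sigma_pos basis_design[folded basis_design_def] K \<epsilon>
      tv_small[OF _ order_trans[OF \<open>K0 \<le> K\<close>]]]
  show "\<exists>K. \<forall>n. outer_prob (traj (Lam n) beta0 sd (m n)) {h \<in> space (traj (Lam n) beta0 sd (m n)).
      e < \<bar>tv_dist (posterior prior sd h (m n)) (mvn (ols h (m n)) (sd\<^sup>2 *\<^sub>R matrix_inv (gram h (m n))))\<bar>}
    \<le> outer_prob (traj (Lam n) beta0 sd (m n)) {h \<in> space (traj (Lam n) beta0 sd (m n)).
      lambda_min (gram h (m n)) \<le> K} + \<eta>"
    by (meson add_left_mono order_trans)
qed

end
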